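(* Let $\alpha\in\mathbb{R}\setminus\mathbb{Q}$, let $v(x)=\sum_{k=-d}^d\hat v_ke^{2\pi ikx}$ be a real-valued trigonometric polynomial of degree $d\ge1$ ($\hat v_d\neq0$), and let $E\in\mathbb{R}$. If the dual cocycle $(\alpha,L_{E,v})$ is $PH2$, then there is no $B\in C^\omega(\mathbb{R}/\mathbb{Z},SL(2,\mathbb{R}))$ with $B(x+\alpha)^{-1}S_E^v(x)B(x)=\mathrm{Id}$ for all $x$.
   Context: $S_E^v(x)=\begin{pmatrix}E-v(x)&-1\\1&0\end{pmatrix}$ is the Schrödinger cocycle of $(Hu)_n=u_{n+1}+u_{n-1}+v(x+n\alpha)u_n$. The dual operator is $(L_{v,\alpha,\theta}u)_n=\sum_{k=-d}^d\hat v_ku_{n+k}+2\cos2\pi(\theta+n\alpha)u_n$, and its cocycle is $(\alpha,L_{E,v})$, $(\theta,w)\mapsto(\theta+\alpha,L_{E,v}(\theta)w)$, where $L_{E,v}(\theta)$ is the $2d\times2d$ matrix with first row $\frac1{\hat v_d}(-\hat v_{d-1},\dots,-\hat v_1,E-2\cos2\pi\theta-\hat v_0,-\hat v_{-1},\dots,-\hat v_{-d})$ and $(j+1)$-th row $e_j^T$ for $j=1,\dots,2d-1$. Iterates: $(L_{E,v})_n(\theta)=L_{E,v}(\theta+(n-1)\alpha)\cdots L_{E,v}(\theta)$. A cocycle $(\alpha,A)$ on $\mathbb{C}^m$ is $k$-dominated if there is a continuous splitting $\mathbb{C}^m=E^+(\theta)\oplus E^-(\theta)$ with $\dim E^+=k$,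 $A(\theta)E^\pm(\theta)=E^\pm(\theta+\alpha)$, and $N\ge1$ with $\|A_N(\theta)u\|>\|A_N(\theta)w\|$ for all $\theta$ and unit $u\in E^+(\theta)$, $w\in E^-(\theta)$. A $2d$-dimensional cocycle is $PH2$ (partially hyperbolic with two-dimensional center) if it is both $(d-1)$-dominated and $(d+1)$-dominated. *)

theory Defs
  imports "HOL-Analysis.Analysis"
begin

text \<open>Vectors in C^m are functions nat => complex vanishing at indices >= m;
  m x m matrices are functions nat => nat => complex (only entries below m matter).\<close>

definition cvec :: "nat \<Rightarrow> (nat \<Rightarrow> complex) set" where
  "cvec m = {u. \<forall>i\<ge>m. u i = 0}"

definition mvmult :: "nat \<Rightarrow> (nat \<Rightarrow> nat \<Rightarrow> complex) \<Rightarrow> (nat \<Rightarrow> complex) \<Rightarrow> (nat \<Rightarrow> complex)" where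
  "mvmult m A u = (\<lambda>i. if i < m then (\<Sum>j<m. A i j * u j) else 0)"

definition vnorm :: "nat \<Rightarrow> (nat \<Rightarrow> complex) \<Rightarrow> real" where
  "vnorm m u = sqrt (\<Sum>i<m. (cmod (u i))\<^sup>2)"

fun cocycle_iter :: "nat \<Rightarrow> real \<Rightarrow> (real \<Rightarrow> nat \<Rightarrow> nat \<Rightarrow> complex) \<Rightarrow> nat \<Rightarrow> real \<Rightarrow> (nat \<Rightarrow> complex) \<Rightarrow> (nat \<Rightarrow> complex)" where
  "cocycle_iter m \<alpha> A 0 \<theta> u = u"
| "cocycle_iter m \<alpha> A (Suc n) \<theta> u = mvmult m (A (\<theta> + real n * \<alpha>)) (cocycle_iter m \<alpha> A n \<theta> u)"

definition lincomb :: "nat \<Rightarrow> (nat \<Rightarrow> nat \<Rightarrow> complex) \<Rightarrow> (nat \<Rightarrow> complex) \<Rightarrow> (nat \<Rightarrow> complex)" where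
  "lincomb k b c = (\<lambda>i. \<Sum>j<k. c j * b j i)"

definition subspace_dim :: "nat \<Rightarrow> (nat \<Rightarrow> complex) set \<Rightarrow> nat \<Rightarrow> bool" where
  "subspace_dim m V k \<longleftrightarrow> V \<subseteq> cvec m \<and>
     (\<exists>b. (\<forall>j<k. b j \<in> V) \<and>
          (\<forall>c. lincomb k b c = (\<lambda>i. 0) \<longrightarrow> (\<forall>j<k. c j = 0)) \<and>
          V = {lincomb k b c | c. True})"

text \<open>k-domination of the cocycle (alpha, A) on C^m over R/Z (theta ranges over R, objects 1-periodic).
  Continuity of the splitting: the projection onto E+ along E- depends continuously on theta.\<close>
definition dominated :: "nat \<Rightarrow> real \<Rightarrow> (real \<Rightarrow> nat \<Rightarrow> nat \<Rightarrow> complex) \<Rightarrow> nat \<Rightarrow> bool" where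
  "dominated m \<alpha> A k \<longleftrightarrow>
    (\<exists>Ep Em :: real \<Rightarrow> (nat \<Rightarrow> complex) set.
       (\<forall>\<theta>. Ep (\<theta> + 1) = Ep \<theta> \<and> Em (\<theta> + 1) = Em \<theta>) \<and>
       (\<forall>\<theta>. subspace_dim m (Ep \<theta>) k \<and> subspace_dim m (Em \<theta>) (m - k)) \<and>
       (\<forall>\<theta>. \<forall>u\<in>cvec m. \<exists>!p. fst p \<in> Ep \<theta> \<and> snd p \<in> Em \<theta> \<and> u = (\<lambda>i. fst p i + snd p i)) \<and>
       (\<exists>P :: real \<Rightarrow> nat \<Rightarrow> nat \<Rightarrow> complex.
          (\<forall>i<m. \<forall>j<m. continuous_on UNIV (\<lambda>\<theta>. P \<theta> i j)) \<and>
          (\<forall>\<theta>. \<forall>u\<in>cvec m. mvmult m (P \<theta>) u \<in> Ep \<theta> \<and>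
                            (\<lambda>i. u i - mvmult m (P \<theta>) u i) \<in> Em \<theta>)) \<and>
       (\<forall>\<theta>. mvmult m (A \<theta>) ` Ep \<theta> = Ep (\<theta> + \<alpha>) \<and> mvmult m (A \<theta>) ` Em \<theta> = Em (\<theta> + \<alpha>)) \<and>
       (\<exists>N\<ge>1. \<forall>\<theta> u w. u \<in> Ep \<theta> \<longrightarrow> w \<in> Em \<theta> \<longrightarrow> vnorm m u = 1 \<longrightarrow> vnorm m w = 1 \<longrightarrow>
          vnorm m (cocycle_iter m \<alpha> A N \<theta> u) > vnorm m (cocycle_iter m \<alpha> A N \<theta> w)))"

definition PH2 :: "nat \<Rightarrow> real \<Rightarrow> (real \<Rightarrow> nat \<Rightarrow> nat \<Rightarrow> complex) \<Rightarrow> bool" where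
  "PH2 d \<alpha> A \<longleftrightarrow> dominated (2*d) \<alpha> A (d - 1) \<and> dominated (2*d) \<alpha> A (d + 1)"

definition dualL :: "nat \<Rightarrow> (int \<Rightarrow> complex) \<Rightarrow> real \<Rightarrow> real \<Rightarrow> nat \<Rightarrow> nat \<Rightarrow> complex" where
  "dualL d vh E \<theta> i j =
     (if i < 2*d \<and> j < 2*d then
        (if i = 0 then
           (let k = int d - 1 - int j in
              (if k = 0 then complex_of_real (E - 2 * cos (2*pi*\<theta>)) - vh 0 else - vh k) / vh (int d))
         else (if j = i - 1 then 1 else 0))
      else 0)"

definition trig_poly :: "nat \<Rightarrow> (int \<Rightarrow> complex) \<Rightarrow> real \<Rightarrow> complex" where
  "trig_poly d vh x = (\<Sum>k\<in>{-int d..int d}. vh k * exp (2 * pi * \<i> * of_int k * of_real x))"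

definition schrodinger :: "(real \<Rightarrow> real) \<Rightarrow> real \<Rightarrow> real \<Rightarrow> real^2^2" where
  "schrodinger v E x = vector [vector [E - v x, -1], vector [1, 0]]"

definition real_analytic :: "(real \<Rightarrow> real) \<Rightarrow> bool" where
  "real_analytic f \<longleftrightarrow> (\<forall>x. \<exists>r>0. \<exists>c :: nat \<Rightarrow> real.
      \<forall>y. \<bar>y - x\<bar> < r \<longrightarrow> (\<lambda>n. c n * (y - x) ^ n) sums f y)"

definition analytic_SL2 :: "(real \<Rightarrow> real^2^2) \<Rightarrow> bool" where
  "analytic_SL2 B \<longleftrightarrow> (\<forall>x. B (x + 1) = B x) \<and> (\<forall>x. det (B x) = 1) \<and>
     (\<forall>i j. real_analytic (\<lambda>x. B x $ i $ j))"

end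

theory Submission
  imports Defs "HOL-Library.Periodic_Fun"
begin

text \<open>Suppose \<open>B\<close> conjugates the Schroedinger cocycle to the identity. Then
  \<open>S(x) B(x) = B(x + \<alpha>)\<close>, so the two entries \<open>b\<^sub>1, b\<^sub>2\<close> of the first row of \<open>B\<close> are continuous
  1-periodic solutions of \<open>b(x + \<alpha>) + b(x - \<alpha>) + v(x) b(x) = E b(x)\<close> with Casoratian \<open>det B = 1\<close>.
  Their Fourier coefficients are two linearly independent solutions of the dual equation
  \<open>\<Sum>\<^sub>k v\<^sub>k u\<^sub>n\<^sub>+\<^sub>k + 2 cos(2\<pi> n\<alpha>) u\<^sub>n = E u\<^sub>n\<close> that tend to 0 as \<open>|n| \<rightarrow> \<infinity>\<close> (Riemann--Lebesgue),
  i.e. two orbits of the dual cocycle through phase 0 that decay in both time directions.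

  The dual cocycle preserves a sesquilinear form \<open>\<omega>\<close> whose isotropic subspaces have dimension
  at most \<open>d\<close>, and \<open>\<omega>(Z, Z) = 0\<close> whenever the cocycle carries a preimage of \<open>Z\<close> of arbitrarily
  small norm to \<open>Z\<close>. Take the \<open>(d-1)\<close>-dominated splitting \<open>E\<^sup>+ \<oplus> E\<^sup>-\<close>. If one of the decaying
  orbits has a nonzero \<open>E\<^sup>+\<close>-component at time 0, domination forces every vector of the
  \<open>(d+1)\<close>-dimensional space \<open>E\<^sup>-(0)\<close> to shrink under forward iteration, so \<open>E\<^sup>-(0)\<close> is isotropic.
  Otherwise both orbits lie in \<open>E\<^sup>-\<close>; iterating backwards, domination makes the preimages of
  \<open>E\<^sup>+(0)\<close> small as well, so the \<open>(d+1)\<close>-dimensional space \<open>E\<^sup>+(0) \<oplus> span(u, w)\<close> is isotropic.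
  Both contradict the dimension bound.\<close>

lemma cvecI: "(\<And>i. i \<ge> m \<Longrightarrow> u i = 0) \<Longrightarrow> u \<in> cvec m"
  by (auto simp: cvec_def)

lemma mvmult_cvec[simp]: "mvmult m M u \<in> cvec m"
  by (auto simp: cvec_def mvmult_def)

lemma mvmult_add: "mvmult m M (\<lambda>i. u i + v i) = (\<lambda>i. mvmult m M u i + mvmult m M v i)"
  by (auto simp: mvmult_def algebra_simps sum.distrib)

lemma mvmult_scale: "mvmult m M (\<lambda>i. c * u i) = (\<lambda>i. c * mvmult m M u i)"
  by (auto simp: mvmult_def algebra_simps sum_distrib_left)

lemma mvmult_zero[simp]: "mvmult m M (\<lambda>i. 0) = (\<lambda>i. 0)"
  by (auto simp: mvmult_def)

lemma mvmult_unit: "i < m \<Longrightarrow> j < m \<Longrightarrow> mvmult m M (\<lambda>t. if t = j then 1 else 0) i = M i j"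
  by (simp add: mvmult_def if_distrib sum.delta cong: if_cong)

lemma cocycle_iter_cvec: "u \<in> cvec m \<Longrightarrow> cocycle_iter m \<alpha> A n \<theta> u \<in> cvec m"
  by (cases n) auto

lemma cocycle_iter_add: "cocycle_iter m \<alpha> A n \<theta> (\<lambda>i. u i + v i) =
   (\<lambda>i. cocycle_iter m \<alpha> A n \<theta> u i + cocycle_iter m \<alpha> A n \<theta> v i)"
  by (induction n) (auto simp: mvmult_add)

lemma cocycle_iter_scale: "cocycle_iter m \<alpha> A n \<theta> (\<lambda>i. c * u i) = (\<lambda>i. c * cocycle_iter m \<alpha> A n \<theta> u i)"
  by (induction n) (auto simp: mvmult_scale)

lemma cocycle_iter_zero[simp]: "cocycle_iter m \<alpha> A n \<theta> (\<lambda>i. 0) = (\<lambda>i. 0)"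
  by (induction n) auto

lemma cocycle_iter_add_steps: "cocycle_iter m \<alpha> A (a + b) \<theta> u =
   cocycle_iter m \<alpha> A b (\<theta> + real a * \<alpha>) (cocycle_iter m \<alpha> A a \<theta> u)"
  by (induction b) (auto simp: algebra_simps)

lemma vnorm_L2: "vnorm m u = L2_set (\<lambda>i. cmod (u i)) {..<m}"
  by (simp add: vnorm_def L2_set_def)

lemma vnorm_nonneg[simp]: "vnorm m u \<ge> 0"
  by (simp add: vnorm_L2)

lemma vnorm_scale: "vnorm m (\<lambda>i. c * u i) = cmod c * vnorm m u"
proof -
  have "vnorm m (\<lambda>i. c * u i) = sqrt ((cmod c)\<^sup>2 * (\<Sum>i<m. (cmod (u i))\<^sup>2))"
    by (simp add: vnorm_def norm_mult power_mult_distrib sum_distrib_left)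
  also have "\<dots> = cmod c * vnorm m u" by (simp add: vnorm_def real_sqrt_mult)
  finally show ?thesis .
qed

lemma norm_le_vnorm: "i < m \<Longrightarrow> cmod (u i) \<le> vnorm m u"
  unfolding vnorm_L2 by (rule member_le_L2_set) auto

lemma vnorm_le_sum: "vnorm m u \<le> (\<Sum>i<m. cmod (u i))"
  unfolding vnorm_L2 by (rule L2_set_le_sum) auto

lemma vnorm_triangle_ineq: "vnorm m (\<lambda>i. u i + v i) \<le> vnorm m u + vnorm m v"
proof -
  have "vnorm m (\<lambda>i. u i + v i) \<le> L2_set (\<lambda>i. cmod (u i) + cmod (v i)) {..<m}"
    unfolding vnorm_L2 by (rule L2_set_mono) (auto intro: norm_triangle_ineq)
  also have "\<dots> \<le> vnorm m u + vnorm m v"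
    unfolding vnorm_L2 by (rule L2_set_triangle_ineq)
  finally show ?thesis .
qed

lemma vnorm_eq_0_iff: "u \<in> cvec m \<Longrightarrow> vnorm m u = 0 \<longleftrightarrow> u = (\<lambda>i. 0)"
proof
  assume u: "u \<in> cvec m" and z: "vnorm m u = 0"
  show "u = (\<lambda>i. 0)"
  proof
    fix i show "u i = 0"
    proof (cases "i < m")
      case True then show ?thesis using norm_le_vnorm[OF True, of u] z by simp
    next
      case False then show ?thesis using u by (auto simp: cvec_def)
    qed
  qed
qed (simp add: vnorm_def)

lemma vnorm_pos: "u \<in> cvec m \<Longrightarrow> u \<noteq> (\<lambda>i. 0) \<Longrightarrow> vnorm m u > 0"
  using vnorm_eq_0_iff[of u m] vnorm_nonneg[of m u] by linarith

lemma mvmult_vnorm_le: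
  assumes "\<And>i j. i < m \<Longrightarrow> j < m \<Longrightarrow> cmod (M i j) \<le> B" and "B \<ge> 0"
  shows "vnorm m (mvmult m M u) \<le> (real m * real m * B) * vnorm m u"
proof -
  have "vnorm m (mvmult m M u) \<le> (\<Sum>i<m. cmod (mvmult m M u i))" by (rule vnorm_le_sum)
  also have "\<dots> \<le> (\<Sum>i<m. \<Sum>j<m. B * vnorm m u)"
  proof (rule sum_mono)
    fix i assume i: "i \<in> {..<m}"
    have "cmod (mvmult m M u i) \<le> (\<Sum>j<m. cmod (M i j * u j))"
      using i by (simp add: mvmult_def norm_sum)
    also have "\<dots> \<le> (\<Sum>j<m. B * vnorm m u)"
    proof (rule sum_mono)
      fix j assume j: "j \<in> {..<m}"
      have "cmod (M i j) * cmod (u j) \<le> B * vnorm m u"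
        by (rule mult_mono) (use i j assms norm_le_vnorm in auto)
      then show "cmod (M i j * u j) \<le> B * vnorm m u" by (simp add: norm_mult)
    qed
    finally show "cmod (mvmult m M u i) \<le> (\<Sum>j<m. B * vnorm m u)" .
  qed
  also have "\<dots> = (real m * real m * B) * vnorm m u" by simp
  finally show ?thesis .
qed

lemma lincomb_add: "lincomb k b (\<lambda>j. c j + c' j) = (\<lambda>i. lincomb k b c i + lincomb k b c' i)"
  by (auto simp: lincomb_def algebra_simps sum.distrib)

lemma lincomb_scale: "lincomb k b (\<lambda>j. x * c j) = (\<lambda>i. x * lincomb k b c i)"
  by (auto simp: lincomb_def algebra_simps sum_distrib_left)

lemma subspace_dim_add: "subspace_dim m V k \<Longrightarrow> u \<in> V \<Longrightarrow> v \<in> V \<Longrightarrow> (\<lambda>i. u i + v i) \<in> V"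
  unfolding subspace_dim_def by (auto simp: lincomb_add[symmetric])

lemma subspace_dim_scale: "subspace_dim m V k \<Longrightarrow> u \<in> V \<Longrightarrow> (\<lambda>i. x * u i) \<in> V"
  unfolding subspace_dim_def by (auto simp: lincomb_scale[symmetric])

lemma subspace_dim_zero: "subspace_dim m V k \<Longrightarrow> (\<lambda>i. 0) \<in> V"
proof -
  assume "subspace_dim m V k"
  then obtain b where "V = {lincomb k b c | c. True}" by (auto simp: subspace_dim_def)
  moreover have "lincomb k b (\<lambda>j. 0) = (\<lambda>i. 0)" by (simp add: lincomb_def)
  ultimately show ?thesis by (metis (mono_tags, lifting) mem_Collect_eq)
qed

lemma subspace_dim_cvec: "subspace_dim m V k \<Longrightarrow> u \<in> V \<Longrightarrow> u \<in> cvec m"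
  unfolding subspace_dim_def by auto

lemma cvec_Suc_eliminate:
  assumes "V \<in> cvec (Suc n)" "W \<in> cvec (Suc n)" "W n \<noteq> 0"
  shows "(\<lambda>t. V t - (V n / W n) * W t) \<in> cvec n"
proof (rule cvecI)
  fix t assume "n \<le> t"
  then have "t = n \<or> t \<ge> Suc n" by auto
  then show "V t - (V n / W n) * W t = 0" using assms by (auto simp: cvec_def)
qed

lemma cvec_dependent:
  "finite I \<Longrightarrow> card I > n \<Longrightarrow> (\<forall>i\<in>I. V i \<in> cvec n) \<Longrightarrow>
    \<exists>c. (\<exists>i\<in>I. c i \<noteq> (0::complex)) \<and> (\<forall>t. (\<Sum>i\<in>I. c i * V i t) = 0)"
proof (induction n arbitrary: I V)
  case 0
  then obtain i where "i \<in> I" by fastforce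
  moreover have "V i t = 0" if "i \<in> I" for i t using 0 that by (auto simp: cvec_def)
  ultimately show ?case by (intro exI[of _ "\<lambda>i. 1"]) auto
next
  case (Suc n)
  show ?case
  proof (cases "\<forall>i\<in>I. V i n = 0")
    case True
    have "\<forall>i\<in>I. V i \<in> cvec n"
    proof (intro ballI cvecI)
      fix i t assume "i \<in> I" "n \<le> t"
      then show "V i t = 0" using True Suc.prems(3) by (cases "t = n") (auto simp: cvec_def)
    qed
    then show ?thesis using Suc.IH[of I V] Suc.prems by auto
  next
    case False
    then obtain i0 where i0: "i0 \<in> I" "V i0 n \<noteq> 0" by auto
    define W where "W i = (\<lambda>t. V i t - (V i n / V i0 n) * V i0 t)" for i
    have W: "\<forall>i\<in>I - {i0}. W i \<in> cvec n"
      unfolding W_def using Suc.prems(3) i0 by (blast intro: cvec_Suc_eliminate)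
    then obtain c' where c': "\<exists>i\<in>I - {i0}. c' i \<noteq> 0" "\<And>t. (\<Sum>i\<in>I - {i0}. c' i * W i t) = 0"
      using Suc.IH[OF _ _ W] Suc.prems(1,2) i0 by (metis card_Diff_singleton finite_Diff Suc_less_eq2 diff_Suc_1)
    define c where "c = c'(i0 := - (\<Sum>i\<in>I - {i0}. c' i * (V i n / V i0 n)))"
    have "(\<Sum>i\<in>I. c i * V i t) = 0" for t
    proof -
      have "(\<Sum>i\<in>I. c i * V i t) = c i0 * V i0 t + (\<Sum>i\<in>I - {i0}. c' i * V i t)"
        using Suc.prems(1) i0 by (simp add: c_def sum.remove)
      also have "(\<Sum>i\<in>I - {i0}. c' i * V i t)
          = (\<Sum>i\<in>I - {i0}. c' i * W i t + c' i * (V i n / V i0 n) * V i0 t)"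
        by (rule sum.cong) (auto simp: W_def algebra_simps)
      also have "\<dots> = (\<Sum>i\<in>I - {i0}. c' i * W i t) + (\<Sum>i\<in>I - {i0}. c' i * (V i n / V i0 n)) * V i0 t"
        by (simp add: sum.distrib sum_distrib_right)
      finally show ?thesis using c'(2)[of t] by (simp add: c_def)
    qed
    moreover have "\<exists>i\<in>I. c i \<noteq> 0" using c'(1) by (auto simp: c_def)
    ultimately show ?thesis by blast
  qed
qed

lemma periodic_plus_of_int:
  assumes "\<And>x. f (x + 1) = f (x::real)"
  shows "f (x + of_int n) = f x"
proof -
  interpret periodic_fun_simple' f by standard (rule assms)
  show ?thesis using plus_of_int[of x n] by simp
qed

lemma periodic_frac:
  assumes "\<And>x. f (x + 1) = f (x::real)"
  shows "f x = f (frac x)"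
  using periodic_plus_of_int[of f "frac x" "\<lfloor>x\<rfloor>"] assms by (simp add: frac_def)

lemma continuous_periodic_bounded:
  fixes f :: "real \<Rightarrow> 'a::real_normed_vector"
  assumes "continuous_on UNIV f" and "\<And>x. f (x + 1) = f x"
  shows "\<exists>B. \<forall>x. norm (f x) \<le> B"
proof -
  have "compact (f ` {0..1})"
    using assms(1) by (intro compact_continuous_image) (auto intro: continuous_on_subset)
  then obtain B where B: "\<And>y. y \<in> {0..1} \<Longrightarrow> norm (f y) \<le> B"
    by (meson compact_imp_bounded bounded_iff imageI)
  have "norm (f x) \<le> B" for x
    using B[of "frac x"] periodic_frac[of f x] assms(2) frac_lt_1[of x] by simp
  then show ?thesis by blast
qed

definition cont_periodic :: "(real \<Rightarrow> complex) \<Rightarrow> bool" where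
  "cont_periodic f \<longleftrightarrow> continuous_on UNIV f \<and> (\<forall>x. f (x + 1) = f x)"

definition fexp :: "int \<Rightarrow> real \<Rightarrow> complex" where
  "fexp k x = exp (2 * pi * \<i> * of_int k * of_real x)"

definition fourier_coeff :: "(real \<Rightarrow> complex) \<Rightarrow> int \<Rightarrow> complex" where
  "fourier_coeff f m = integral {0..1} (\<lambda>x. f x * fexp (-m) x)"

lemma fexp_cis: "fexp k x = cis (2 * pi * of_int k * x)"
  by (simp add: fexp_def cis_conv_exp mult_ac)

lemma fexp_add: "fexp k (x + y) = fexp k x * fexp k y"
  by (simp add: fexp_def algebra_simps exp_add[symmetric])

lemma fexp_mult: "fexp k x * fexp j x = fexp (k + j) x"
  by (simp add: fexp_def algebra_simps exp_add[symmetric])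

lemma fexp_zero[simp]: "fexp 0 x = 1"
  by (simp add: fexp_def)

lemma fexp_one: "fexp k 1 = 1"
proof -
  have "cis (2 * pi * of_int k) = 1" by (rule cis_multiple_2pi) simp
  then show ?thesis by (simp add: fexp_cis)
qed

lemma fexp_periodic: "fexp k (x + 1) = fexp k x"
  by (simp add: fexp_add fexp_one)

lemma fexp_cnj: "cnj (fexp k x) = fexp (-k) x"
  by (simp add: fexp_cis cis_cnj)

lemma fexp_half_period: "k \<noteq> 0 \<Longrightarrow> fexp k (1 / (2 * real_of_int k)) = -1"
  by (simp add: fexp_cis)

lemma continuous_on_fexp[continuous_intros]: "continuous_on S (fexp k)"
  unfolding fexp_def by (intro continuous_intros)

lemma norm_fexp[simp]: "cmod (fexp k x) = 1"
  by (simp add: fexp_cis)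

lemma cont_periodic_fexp: "cont_periodic (fexp k)"
  by (simp add: cont_periodic_def continuous_on_fexp fexp_periodic)

lemma cont_periodic_mult: "cont_periodic f \<Longrightarrow> cont_periodic g \<Longrightarrow> cont_periodic (\<lambda>x. f x * g x)"
  by (auto simp: cont_periodic_def intro: continuous_on_mult)

lemma cont_periodic_add: "cont_periodic f \<Longrightarrow> cont_periodic g \<Longrightarrow> cont_periodic (\<lambda>x. f x + g x)"
  by (auto simp: cont_periodic_def intro: continuous_on_add)

lemma cont_periodic_diff: "cont_periodic f \<Longrightarrow> cont_periodic g \<Longrightarrow> cont_periodic (\<lambda>x. f x - g x)"
  by (auto simp: cont_periodic_def intro: continuous_on_diff)

lemma cont_periodic_scale: "cont_periodic f \<Longrightarrow> cont_periodic (\<lambda>x. c * f x)"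
  by (auto simp: cont_periodic_def intro: continuous_on_mult continuous_on_const)

lemma cont_periodic_cnj: "cont_periodic h \<Longrightarrow> cont_periodic (\<lambda>x. cnj (h x))"
  by (auto simp: cont_periodic_def intro: continuous_on_cnj)

lemma cont_periodic_shift: "cont_periodic f \<Longrightarrow> cont_periodic (\<lambda>x. f (x + c))"
proof -
  assume f: "cont_periodic f"
  have "continuous_on UNIV (\<lambda>x. f (x + c))"
    using f unfolding cont_periodic_def
    by (intro continuous_on_compose2[of UNIV f UNIV "\<lambda>x. x + c"]) (auto intro: continuous_intros)
  then show ?thesis using f by (simp add: cont_periodic_def add_ac) (metis add.assoc add.commute)
qed

lemma cont_periodic_continuous_on: "cont_periodic f \<Longrightarrow> continuous_on S f"
  unfolding cont_periodic_def by (auto intro: continuous_on_subset)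

lemma cont_periodic_integrable: "cont_periodic f \<Longrightarrow> f integrable_on {a..b}"
  by (auto intro: integrable_continuous_interval cont_periodic_continuous_on)

lemma cont_periodic_plus_of_int: "cont_periodic f \<Longrightarrow> f (x + of_int n) = f x"
  by (rule periodic_plus_of_int) (simp add: cont_periodic_def)

lemma cont_periodic_frac: "cont_periodic f \<Longrightarrow> f x = f (frac x)"
  by (rule periodic_frac) (simp add: cont_periodic_def)

lemma cont_periodic_bounded: "cont_periodic f \<Longrightarrow> \<exists>B. \<forall>x. cmod (f x) \<le> B"
  unfolding cont_periodic_def by (blast intro: continuous_periodic_bounded)

lemma integral_shift_unit:
  assumes f: "cont_periodic f" and c: "0 \<le> c" "c \<le> 1"
  shows "integral {0..1} (\<lambda>x. f (x + c)) = integral {0..1} f"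
proof -
  have "integral {0..1} (\<lambda>x. f (x + c)) = integral {0..1} (f \<circ> ((+) c))"
    by (simp add: o_def add.commute)
  also have "\<dots> = integral {c..1+c} f" using integral_shift_Icc_real[of 0 1 f c] by simp
  also have "\<dots> = integral {c..1} f + integral {1..1+c} f"
    using Henstock_Kurzweil_Integration.integral_combine[where a=c and c=1 and b="1+c" and f=f] c cont_periodic_integrable[OF f]
    by simp
  also have "integral {1..1+c} f = integral {0..c} f"
  proof -
    have "integral {0..c} (f \<circ> ((+) 1)) = integral {0+1..c+1} f" by (rule integral_shift_Icc_real)
    moreover have "f \<circ> ((+) 1) = f" using f by (auto simp: cont_periodic_def o_def add.commute)
    ultimately show ?thesis by (simp add: add.commute)
  qed
  also have "integral {c..1} f + integral {0..c} f = integral {0..1} f"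
    using Henstock_Kurzweil_Integration.integral_combine[where a=0 and c=c and b=1 and f=f] c cont_periodic_integrable[OF f]
    by (simp add: add.commute)
  finally show ?thesis .
qed

lemma integral_period_shift:
  assumes f: "cont_periodic f"
  shows "integral {0..1} (\<lambda>x. f (x + c)) = integral {0..1} f"
proof -
  have "f (x + c) = f (x + frac c)" for x
    using cont_periodic_plus_of_int[OF f, of "x + frac c" "floor c"] by (simp add: frac_def algebra_simps)
  then have "integral {0..1} (\<lambda>x. f (x + c)) = integral {0..1} (\<lambda>x. f (x + frac c))" by simp
  also have "\<dots> = integral {0..1} f"
    using integral_shift_unit[OF f, of "frac c"] frac_ge_0[of c] frac_lt_1[of c] by simp
  finally show ?thesis .
qed

lemma integral_fexp: "integral {0..1} (fexp k) = (if k = 0 then 1 else 0)"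
proof (cases "k = 0")
  case True
  have "fexp 0 = (\<lambda>x. 1)" by (rule ext) simp
  then show ?thesis using True by simp
next
  case False
  define c where "c = 1 / (2 * real_of_int k)"
  have "integral {0..1} (fexp k) = integral {0..1} (\<lambda>x. fexp k (x + c))"
    using integral_period_shift[OF cont_periodic_fexp, of k c] by simp
  also have "\<dots> = integral {0..1} (\<lambda>x. fexp k x * (-1))"
    using False by (simp add: fexp_add fexp_half_period c_def)
  also have "\<dots> = - integral {0..1} (fexp k)" by simp
  finally show ?thesis using False by simp
qed

lemma fourier_coeff_shift:
  assumes f: "cont_periodic f"
  shows "fourier_coeff (\<lambda>x. f (x + c)) m = fexp m c * fourier_coeff f m"
proof -
  have "(\<lambda>x. f (x + c) * fexp (-m) x) = (\<lambda>x. fexp m c * (f (x + c) * fexp (-m) (x + c)))"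
    by (auto simp: fexp_add fexp_mult fun_eq_iff mult_ac)
  then have "fourier_coeff (\<lambda>x. f (x + c)) m
      = fexp m c * integral {0..1} (\<lambda>x. f (x + c) * fexp (-m) (x + c))"
    by (simp add: fourier_coeff_def)
  also have "integral {0..1} (\<lambda>x. f (x + c) * fexp (-m) (x + c)) = fourier_coeff f m"
    unfolding fourier_coeff_def using integral_period_shift[OF cont_periodic_mult[OF f cont_periodic_fexp], of c] .
  finally show ?thesis .
qed

lemma fourier_coeff_mult_fexp: "fourier_coeff (\<lambda>x. fexp k x * f x) m = fourier_coeff f (m - k)"
  unfolding fourier_coeff_def
  by (rule arg_cong[where f="integral _"]) (auto simp: fun_eq_iff mult_ac fexp_mult[symmetric, of k] fexp_mult)

lemma fourier_coeff_add:
  "cont_periodic f \<Longrightarrow> cont_periodic g \<Longrightarrow> fourier_coeff (\<lambda>x. f x + g x) m = fourier_coeff f m + fourier_coeff g m"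
  unfolding fourier_coeff_def using cont_periodic_integrable[OF cont_periodic_mult[OF _ cont_periodic_fexp]]
  by (simp add: distrib_right integral_add)

lemma fourier_coeff_scale: "fourier_coeff (\<lambda>x. c * f x) m = c * fourier_coeff f m"
  unfolding fourier_coeff_def by (simp add: mult.assoc)

lemma fourier_coeff_sum:
  "finite K \<Longrightarrow> (\<And>k. k \<in> K \<Longrightarrow> cont_periodic (g k)) \<Longrightarrow>
    fourier_coeff (\<lambda>x. \<Sum>k\<in>K. g k x) m = (\<Sum>k\<in>K. fourier_coeff (g k) m)"
  unfolding fourier_coeff_def using cont_periodic_integrable[OF cont_periodic_mult[OF _ cont_periodic_fexp]]
  by (simp add: sum_distrib_right integral_sum)

lemma fourier_coeff_fexp: "fourier_coeff (fexp k) m = (if k = m then 1 else 0)"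
proof -
  have "fourier_coeff (fexp k) m = integral {0..1} (fexp (k - m))"
    unfolding fourier_coeff_def by (simp add: fexp_mult)
  then show ?thesis by (simp add: integral_fexp)
qed

lemma cont_periodic_uniformly_continuous:
  assumes f: "cont_periodic f" and e: "\<epsilon> > 0"
  shows "\<exists>\<delta>>0. \<forall>x y. \<bar>x - y\<bar> < \<delta> \<longrightarrow> cmod (f x - f y) < \<epsilon>"
proof -
  have "uniformly_continuous_on {-1..2} f"
    using f by (intro compact_uniformly_continuous cont_periodic_continuous_on) auto
  then obtain d where d: "d > 0"
    "\<And>x x'. x \<in> {-1..2} \<Longrightarrow> x' \<in> {-1..2} \<Longrightarrow> dist x' x < d \<Longrightarrow> dist (f x') (f x) < \<epsilon>"
    unfolding uniformly_continuous_on_def using e by metis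
  define \<delta> where "\<delta> = min d 1"
  have "cmod (f x - f y) < \<epsilon>" if xy: "\<bar>x - y\<bar> < \<delta>" for x y
  proof -
    define n where "n = floor x"
    have fx: "f x = f (x - of_int n)" using cont_periodic_plus_of_int[OF f, of "x - of_int n" n] by simp
    have fy: "f y = f (y - of_int n)" using cont_periodic_plus_of_int[OF f, of "y - of_int n" n] by simp
    have x0: "0 \<le> x - of_int n" "x - of_int n < 1"
      using floor_correct[of x] by (simp_all add: n_def) linarith
    have x': "x - of_int n \<in> {-1..2}" using x0 by auto
    have "\<bar>x - y\<bar> < 1" using xy by (simp add: \<delta>_def)
    then have y': "y - of_int n \<in> {-1..2}" using x0 by auto
    have "dist (x - of_int n) (y - of_int n) < d" using xy by (simp add: dist_real_def \<delta>_def)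
    from d(2)[OF y' x' this] show ?thesis by (simp add: fx fy dist_norm)
  qed
  moreover have "\<delta> > 0" using d by (simp add: \<delta>_def)
  ultimately show ?thesis by blast
qed

text \<open>Shifting by half a period of \<open>fexp m\<close> flips the sign of the \<open>m\<close>-th coefficient.\<close>
lemma fourier_coeff_half_period:
  assumes f: "cont_periodic f" and m: "m \<noteq> 0"
  defines "c \<equiv> 1 / (2 * real_of_int m)"
  shows "2 * fourier_coeff f m = integral {0..1} (\<lambda>x. (f x - f (x + c)) * fexp (-m) x)"
proof -
  have sh: "fourier_coeff (\<lambda>x. f (x + c)) m = - fourier_coeff f m"
    using fourier_coeff_shift[OF f, of c m] fexp_half_period[OF m] by (simp add: c_def)
  have int1: "(\<lambda>x. f x * fexp (-m) x) integrable_on {0..1}"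
    by (rule cont_periodic_integrable[OF cont_periodic_mult[OF f cont_periodic_fexp]])
  have int2: "(\<lambda>x. f (x + c) * fexp (-m) x) integrable_on {0..1}"
    by (rule cont_periodic_integrable[OF cont_periodic_mult[OF cont_periodic_shift[OF f] cont_periodic_fexp]])
  have "2 * fourier_coeff f m = fourier_coeff f m - fourier_coeff (\<lambda>x. f (x + c)) m"
    using sh by simp
  also have "\<dots> = integral {0..1} (\<lambda>x. (f x - f (x + c)) * fexp (-m) x)"
    unfolding fourier_coeff_def using integral_diff[OF int1 int2] by (simp add: algebra_simps)
  finally show ?thesis .
qed

definition decaying :: "(int \<Rightarrow> 'a::real_normed_vector) \<Rightarrow> bool" where
  "decaying u \<longleftrightarrow> (\<forall>\<epsilon>>0. \<exists>M. \<forall>n. \<bar>n\<bar> \<ge> M \<longrightarrow> norm (u n) < \<epsilon>)"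

lemma decaying_reflect:
  assumes "decaying u"
  shows "decaying (\<lambda>n. u (-n))"
  unfolding decaying_def
proof (intro allI impI)
  fix \<epsilon> :: real assume "\<epsilon> > 0"
  then obtain M where "\<forall>n. \<bar>n\<bar> \<ge> M \<longrightarrow> norm (u n) < \<epsilon>" using assms unfolding decaying_def by blast
  then show "\<exists>M. \<forall>n. \<bar>n\<bar> \<ge> M \<longrightarrow> norm (u (- n)) < \<epsilon>" by (intro exI[of _ M]) simp
qed

lemma decaying_along_multiples:
  assumes "decaying f" and "\<epsilon> > 0" and "N \<ge> 1"
  shows "\<exists>k0. \<forall>k\<ge>k0. norm (f (int (k*N))) < \<epsilon> \<and> norm (f (- int (k*N))) < \<epsilon>"
proof -
  obtain M where M: "\<And>n. \<bar>n\<bar> \<ge> M \<Longrightarrow> norm (f n) < \<epsilon>" using assms unfolding decaying_def by blast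
  have "norm (f (int (k*N))) < \<epsilon> \<and> norm (f (- int (k*N))) < \<epsilon>" if "k \<ge> nat M" for k
  proof -
    have "k * N \<ge> k" using assms(3) by simp
    then have "int (k*N) \<ge> M" using that by linarith
    then show ?thesis using M by auto
  qed
  then show ?thesis by blast
qed

lemma riemann_lebesgue:
  assumes f: "cont_periodic f"
  shows "decaying (fourier_coeff f)"
  unfolding decaying_def
proof (intro allI impI)
  fix \<epsilon> :: real assume e: "\<epsilon> > 0"
  obtain \<delta> where \<delta>: "\<delta> > 0" "\<And>x y. \<bar>x - y\<bar> < \<delta> \<Longrightarrow> cmod (f x - f y) < \<epsilon>"
    using cont_periodic_uniformly_continuous[OF f e] by blast
  have "cmod (fourier_coeff f m) < \<epsilon>" if m: "\<bar>m\<bar> \<ge> \<lceil>1 / \<delta>\<rceil> + 1" for m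
  proof -
    have mpos: "real_of_int \<bar>m\<bar> > 1 / \<delta>" using m by linarith
    then have m0: "m \<noteq> 0" using \<delta> by auto
    define c where "c = 1 / (2 * real_of_int m)"
    have "\<bar>c\<bar> \<le> 1 / real_of_int \<bar>m\<bar>" using m0 by (simp add: c_def abs_mult divide_simps)
    also have "\<dots> < \<delta>" using mpos \<delta>(1) m0 by (simp add: field_simps)
    finally have cd: "\<bar>c\<bar> < \<delta>" .
    have "cmod (integral {0..1} (\<lambda>x. (f x - f (x + c)) * fexp (-m) x)) \<le> \<epsilon> * (1 - 0)"
    proof (rule integral_bound)
      show "continuous_on {0..1} (\<lambda>x. (f x - f (x + c)) * fexp (-m) x)"
        by (intro cont_periodic_continuous_on cont_periodic_mult cont_periodic_diff
            cont_periodic_shift f cont_periodic_fexp)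
      fix t assume "t \<in> {0..1::real}"
      have "cmod (f t - f (t + c)) < \<epsilon>" using \<delta>(2)[of t "t + c"] cd by simp
      then show "cmod ((f t - f (t + c)) * fexp (-m) t) \<le> \<epsilon>" by (simp add: norm_mult)
    qed simp
    then have "cmod (2 * fourier_coeff f m) \<le> \<epsilon>"
      using fourier_coeff_half_period[OF f m0] by (simp add: c_def)
    then show ?thesis using e by (simp add: norm_mult)
  qed
  then show "\<exists>M. \<forall>m. \<bar>m\<bar> \<ge> M \<longrightarrow> norm (fourier_coeff f m) < \<epsilon>" by auto
qed

inductive trig_sum :: "(real \<Rightarrow> complex) \<Rightarrow> bool" where
  trig_sum_fexp: "trig_sum (\<lambda>x. c * fexp k x)"
| trig_sum_add: "trig_sum f \<Longrightarrow> trig_sum g \<Longrightarrow> trig_sum (\<lambda>x. f x + g x)"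

lemma trig_sum_cont_periodic: "trig_sum f \<Longrightarrow> cont_periodic f"
  by (induction rule: trig_sum.induct) (auto intro: cont_periodic_add cont_periodic_scale cont_periodic_fexp)

lemma trig_sum_const: "trig_sum (\<lambda>x. c)"
  using trig_sum_fexp[of c 0] by simp

lemma trig_sum_mult_monomial: "trig_sum f \<Longrightarrow> trig_sum (\<lambda>x. (c * fexp k x) * f x)"
proof (induction rule: trig_sum.induct)
  case (trig_sum_fexp c' k')
  have "(\<lambda>x. (c * fexp k x) * (c' * fexp k' x)) = (\<lambda>x. (c * c') * fexp (k + k') x)"
    by (auto simp: fun_eq_iff fexp_mult[symmetric] mult_ac)
  then show ?case using trig_sum.trig_sum_fexp by metis
next
  case (trig_sum_add f g)
  have "(\<lambda>x. (c * fexp k x) * (f x + g x)) = (\<lambda>x. (c * fexp k x) * f x + (c * fexp k x) * g x)"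
    by (auto simp: fun_eq_iff algebra_simps)
  then show ?case using trig_sum.trig_sum_add[OF trig_sum_add.IH] by metis
qed

lemma trig_sum_mult: "trig_sum f \<Longrightarrow> trig_sum g \<Longrightarrow> trig_sum (\<lambda>x. f x * g x)"
proof (induction rule: trig_sum.induct)
  case (trig_sum_fexp c k)
  then show ?case by (rule trig_sum_mult_monomial)
next
  case (trig_sum_add f1 f2)
  have "(\<lambda>x. (f1 x + f2 x) * g x) = (\<lambda>x. f1 x * g x + f2 x * g x)"
    by (auto simp: fun_eq_iff algebra_simps)
  then show ?case
    using trig_sum.trig_sum_add[OF trig_sum_add.IH(1)[OF trig_sum_add.prems] trig_sum_add.IH(2)[OF trig_sum_add.prems]]
    by metis
qed

lemma trig_sum_orthogonal:
  assumes h: "cont_periodic h" and z: "\<And>m. fourier_coeff h m = 0"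
  shows "trig_sum f \<Longrightarrow> integral {0..1} (\<lambda>x. h x * f x) = 0"
proof (induction rule: trig_sum.induct)
  case (trig_sum_fexp c k)
  have "integral {0..1} (\<lambda>x. h x * (c * fexp k x)) = c * fourier_coeff h (-k)"
    unfolding fourier_coeff_def by (simp add: mult_ac)
  then show ?case using z by simp
next
  case (trig_sum_add f g)
  have i1: "(\<lambda>x. h x * f x) integrable_on {0..1}"
    using cont_periodic_integrable[OF cont_periodic_mult[OF h trig_sum_cont_periodic[OF trig_sum_add.hyps(1)]]] .
  have i2: "(\<lambda>x. h x * g x) integrable_on {0..1}"
    using cont_periodic_integrable[OF cont_periodic_mult[OF h trig_sum_cont_periodic[OF trig_sum_add.hyps(2)]]] .
  have "integral {0..1} (\<lambda>x. h x * (f x + g x)) = integral {0..1} (\<lambda>x. h x * f x + h x * g x)"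
    by (simp add: algebra_simps)
  also have "\<dots> = 0" using integral_add[OF i1 i2] trig_sum_add.IH by simp
  finally show ?case .
qed

lemma bounded_linear_complex_decomp:
  assumes "bounded_linear (p :: complex \<Rightarrow> real)"
  shows "p z = p 1 * Re z + p \<i> * Im z"
proof -
  interpret bounded_linear p by (rule assms)
  have "z = Re z *\<^sub>R 1 + Im z *\<^sub>R \<i>" by (simp add: complex_eq_iff)
  then have "p z = p (Re z *\<^sub>R 1 + Im z *\<^sub>R \<i>)" by simp
  also have "\<dots> = Re z * p 1 + Im z * p \<i>" by (simp add: add scaleR)
  finally show ?thesis by simp
qed

lemma trig_sum_real_polynomial:
  "real_polynomial_function p \<Longrightarrow> trig_sum (\<lambda>x. complex_of_real (p (fexp 1 x)))"
proof (induction rule: real_polynomial_function.induct)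
  case (linear p)
  define a where "a = complex_of_real (p 1) / 2"
  define b where "b = complex_of_real (p \<i>) / (2 * \<i>)"
  have "complex_of_real (p z) = (a + b) * z + (a - b) * cnj z" for z
  proof -
    have "(a + b) * z + (a - b) * cnj z = a * (z + cnj z) + b * (z - cnj z)"
      by (simp add: algebra_simps)
    also have "\<dots> = complex_of_real (p 1 * Re z) + complex_of_real (p \<i>) * complex_of_real (Im z) * (\<i> / \<i>)"
      unfolding complex_add_cnj complex_diff_cnj a_def b_def by (simp add: field_simps)
    also have "\<dots> = complex_of_real (p z)"
      using bounded_linear_complex_decomp[OF linear, of z] by simp
    finally show ?thesis ..
  qed
  then have "(\<lambda>x. complex_of_real (p (fexp 1 x))) = (\<lambda>x. (a + b) * fexp 1 x + (a - b) * fexp (-1) x)"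
    by (simp add: fexp_cnj)
  then show ?case using trig_sum_add[OF trig_sum_fexp trig_sum_fexp] by metis
next
  case (const c)
  then show ?case by (rule trig_sum_const)
next
  case (add f g)
  then show ?case using trig_sum_add by (simp add: of_real_add)
next
  case (mult f g)
  then show ?case using trig_sum_mult by (simp add: of_real_mult)
qed

lemma fexp1_eq_imp: "fexp 1 s = fexp 1 t \<Longrightarrow> \<exists>n::int. s = t + of_int n"
proof -
  assume "fexp 1 s = fexp 1 t"
  then have "exp (2 * pi * \<i> * complex_of_real s) = exp (2 * pi * \<i> * complex_of_real t)"
    by (simp add: fexp_def)
  then obtain n :: int
    where "2 * pi * \<i> * complex_of_real s = 2 * pi * \<i> * complex_of_real t + (of_int (2 * n) * pi) * \<i>"
    unfolding exp_eq by blast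
  then have "Im (2 * pi * \<i> * complex_of_real s) = Im (2 * pi * \<i> * complex_of_real t + (of_int (2 * n) * pi) * \<i>)"
    by simp
  then have "(2 * pi) * s = (2 * pi) * (t + of_int n)" by (simp add: algebra_simps)
  then have "s = t + of_int n" by (simp only: mult_cancel_left) simp
  then show ?thesis by blast
qed

lemma fexp1_image: "fexp 1 ` {0..1} = sphere 0 1"
proof
  show "fexp 1 ` {0..1} \<subseteq> sphere 0 1" by auto
  show "sphere 0 1 \<subseteq> fexp 1 ` {0..1}"
  proof
    fix z :: complex assume "z \<in> sphere 0 1"
    then have z: "cmod z = 1" by simp
    have a: "0 \<le> Arg2pi z" "Arg2pi z < 2 * pi" "z = of_real (cmod z) * exp (\<i> * of_real (Arg2pi z))"
      using Arg2pi[of z] by (auto simp: is_Arg_def)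
    then have "Arg2pi z / (2 * pi) \<in> {0..1}" by simp
    moreover have "fexp 1 (Arg2pi z / (2 * pi)) = z"
      using a(3) z by (simp add: fexp_def mult_ac)
    ultimately show "z \<in> fexp 1 ` {0..1}" by (metis image_eqI)
  qed
qed

definition circle_lift :: "(real \<Rightarrow> complex) \<Rightarrow> complex \<Rightarrow> complex" where
  "circle_lift h z = h (SOME t. fexp 1 t = z)"

lemma circle_lift_fexp: "cont_periodic h \<Longrightarrow> circle_lift h (fexp 1 s) = h s"
proof -
  assume h: "cont_periodic h"
  have "fexp 1 (SOME t. fexp 1 t = fexp 1 s) = fexp 1 s" by (rule someI_ex) blast
  then obtain n :: int where "(SOME t. fexp 1 t = fexp 1 s) = s + of_int n" using fexp1_eq_imp by blast
  then show ?thesis unfolding circle_lift_def using cont_periodic_plus_of_int[OF h] by simp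
qed

lemma continuous_on_circle_lift:
  assumes h: "cont_periodic h"
  shows "continuous_on (sphere 0 1) (circle_lift h)"
  unfolding continuous_openin_preimage_eq
proof (intro allI impI)
  fix B :: "complex set" assume B: "open B"
  define U where "U = sphere 0 1 \<inter> circle_lift h -` B"
  have q: "openin (top_of_set {0..1}) ({0..1} \<inter> fexp 1 -` U) \<longleftrightarrow> openin (top_of_set (sphere 0 1)) U"
    by (rule Abstract_Topology_2.continuous_imp_quotient_map[OF continuous_on_fexp fexp1_image]) (auto simp: U_def)
  have "{0..1} \<inter> fexp 1 -` U = {0..1} \<inter> h -` B"
    using fexp1_image circle_lift_fexp[OF h] by (auto simp: U_def)
  moreover have "openin (top_of_set {0..1}) ({0..1} \<inter> h -` B)"
    using B cont_periodic_continuous_on[OF h] unfolding continuous_openin_preimage_eq by blast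
  ultimately show "openin (top_of_set (sphere 0 1)) (sphere 0 1 \<inter> circle_lift h -` B)"
    using q by (simp add: U_def)
qed

lemma real_polynomial_approx_on_circle:
  fixes f :: "complex \<Rightarrow> real"
  assumes "continuous_on (sphere 0 1) f" and "\<epsilon> > 0"
  shows "\<exists>g. real_polynomial_function g \<and> (\<forall>z\<in>sphere 0 1. \<bar>f z - g z\<bar> < \<epsilon>)"
proof (rule Stone_Weierstrass_HOL[where P=real_polynomial_function])
  show "real_polynomial_function p \<Longrightarrow> continuous_on (sphere 0 1) p" for p
    by (meson continuous_at_imp_continuous_on continuous_real_polymonial_function)
  show "\<exists>f. real_polynomial_function f \<and> f x \<noteq> f y"
    if "x \<in> sphere 0 1 \<and> y \<in> sphere 0 1 \<and> x \<noteq> y" for x y :: complex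
  proof (cases "Re x = Re y")
    case True
    then have "Im x \<noteq> Im y" using that complex_eq_iff by blast
    then show ?thesis using real_polynomial_function.intros(1)[OF bounded_linear_Im] by blast
  next
    case False
    then show ?thesis using real_polynomial_function.intros(1)[OF bounded_linear_Re] by blast
  qed
qed (use assms in auto)

lemma trig_sum_approx_cnj:
  assumes h: "cont_periodic h" and e: "\<epsilon> > 0"
  shows "\<exists>P. trig_sum P \<and> (\<forall>x. cmod (cnj (h x) - P x) \<le> 2 * \<epsilon>)"
proof -
  let ?H = "\<lambda>z. cnj (circle_lift h z)"
  have "continuous_on (sphere 0 1) (\<lambda>z. Re (?H z))" "continuous_on (sphere 0 1) (\<lambda>z. Im (?H z))"
    by (intro continuous_intros continuous_on_circle_lift[OF h])+
  from real_polynomial_approx_on_circle[OF this(1) e] real_polynomial_approx_on_circle[OF this(2) e]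
  obtain g1 g2 where
    g1: "real_polynomial_function g1" "\<And>z. z \<in> sphere 0 1 \<Longrightarrow> \<bar>Re (?H z) - g1 z\<bar> < \<epsilon>" and
    g2: "real_polynomial_function g2" "\<And>z. z \<in> sphere 0 1 \<Longrightarrow> \<bar>Im (?H z) - g2 z\<bar> < \<epsilon>"
    by blast
  define P where "P x = complex_of_real (g1 (fexp 1 x)) + \<i> * complex_of_real (g2 (fexp 1 x))" for x
  have "trig_sum P"
    unfolding P_def by (intro trig_sum_add trig_sum_real_polynomial g1(1) trig_sum_mult[OF trig_sum_const] g2(1))
  moreover have "cmod (cnj (h x) - P x) \<le> 2 * \<epsilon>" for x
  proof -
    have z: "fexp 1 x \<in> sphere 0 1" by simp
    define a where "a = Re (?H (fexp 1 x)) - g1 (fexp 1 x)"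
    define b where "b = Im (?H (fexp 1 x)) - g2 (fexp 1 x)"
    have "cnj (h x) - P x = complex_of_real a + \<i> * complex_of_real b"
      unfolding P_def a_def b_def circle_lift_fexp[OF h] by (simp add: complex_eq_iff)
    then have "cmod (cnj (h x) - P x) \<le> cmod (complex_of_real a) + cmod (\<i> * complex_of_real b)"
      by (metis norm_triangle_ineq)
    also have "\<dots> = \<bar>a\<bar> + \<bar>b\<bar>" by (simp add: norm_mult)
    also have "\<dots> \<le> 2 * \<epsilon>" using g1(2)[OF z] g2(2)[OF z] by (simp add: a_def b_def)
    finally show ?thesis .
  qed
  ultimately show ?thesis by blast
qed

lemma fourier_coeff_zero_imp_integral_norm_sq_zero:
  assumes h: "cont_periodic h" and z: "\<And>m. fourier_coeff h m = 0"
  shows "integral {0..1} (\<lambda>x. h x * cnj (h x)) = 0"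
proof -
  define I where "I = integral {0..1} (\<lambda>x. h x * cnj (h x))"
  obtain Bh where Bh: "\<And>x. cmod (h x) \<le> Bh" using cont_periodic_bounded[OF h] by blast
  have Bh0: "Bh \<ge> 0" using Bh[of 0] norm_ge_zero order_trans by blast
  have small: "cmod I \<le> 2 * Bh * \<epsilon>" if e: "\<epsilon> > 0" for \<epsilon>
  proof -
    obtain P where P: "trig_sum P" "\<And>x. cmod (cnj (h x) - P x) \<le> 2 * \<epsilon>"
      using trig_sum_approx_cnj[OF h e] by blast
    have i1: "(\<lambda>x. h x * cnj (h x)) integrable_on {0..1}"
      by (rule cont_periodic_integrable[OF cont_periodic_mult[OF h cont_periodic_cnj[OF h]]])
    have i2: "(\<lambda>x. h x * P x) integrable_on {0..1}"
      by (rule cont_periodic_integrable[OF cont_periodic_mult[OF h trig_sum_cont_periodic[OF P(1)]]])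
    have "I = integral {0..1} (\<lambda>x. h x * cnj (h x)) - integral {0..1} (\<lambda>x. h x * P x)"
      using trig_sum_orthogonal[OF h z P(1)] by (simp add: I_def)
    also have "\<dots> = integral {0..1} (\<lambda>x. h x * (cnj (h x) - P x))"
      using integral_diff[OF i1 i2] by (simp add: algebra_simps)
    also have "cmod \<dots> \<le> (Bh * (2 * \<epsilon>)) * (1 - 0)"
    proof (rule integral_bound)
      show "continuous_on {0..1} (\<lambda>x. h x * (cnj (h x) - P x))"
        by (intro cont_periodic_continuous_on cont_periodic_mult cont_periodic_diff h
            cont_periodic_cnj trig_sum_cont_periodic P(1))
      fix t :: real
      have "cmod (h t) * cmod (cnj (h t) - P t) \<le> Bh * (2 * \<epsilon>)"
        by (rule mult_mono) (use Bh[of t] P(2)[of t] Bh0 in auto)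
      then show "cmod (h t * (cnj (h t) - P t)) \<le> Bh * (2 * \<epsilon>)" by (simp add: norm_mult)
    qed simp
    finally show ?thesis by simp
  qed
  show ?thesis
  proof (rule ccontr)
    assume "integral {0..1} (\<lambda>x. h x * cnj (h x)) \<noteq> 0"
    then have pos: "cmod I > 0" by (simp add: I_def)
    define \<epsilon> where "\<epsilon> = cmod I / (2 * (Bh + 1))"
    have "cmod I \<le> 2 * Bh * \<epsilon>" by (rule small) (use pos Bh0 in \<open>simp add: \<epsilon>_def\<close>)
    also have "\<dots> < cmod I" using pos Bh0 by (simp add: \<epsilon>_def field_simps)
    finally show False by simp
  qed
qed

lemma integral_norm_sq_zero_imp_zero:
  assumes h: "cont_periodic h" and I0: "integral {0..1} (\<lambda>x. h x * cnj (h x)) = 0"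
  shows "h x = 0"
proof -
  define f where "f x = (cmod (h x))\<^sup>2" for x
  have cf: "continuous_on {0..1} f"
    unfolding f_def by (intro continuous_intros cont_periodic_continuous_on h)
  have fi: "f integrable_on {0..1}" by (rule integrable_continuous_interval[OF cf])
  have "((\<lambda>x. complex_of_real (f x)) has_integral complex_of_real (integral {0..1} f)) {0..1}"
    by (rule has_integral_of_real[OF integrable_integral[OF fi]])
  moreover have "(\<lambda>x. complex_of_real (f x)) = (\<lambda>x. h x * cnj (h x))"
    by (auto simp: f_def complex_norm_square[symmetric])
  ultimately have "integral {0..1} f = 0" using I0 by (metis integral_unique of_real_eq_0_iff)
  then have f0: "(f has_integral 0) (cbox 0 1)" using integrable_integral[OF fi] by simp
  have "f y = 0" if "y \<in> {0..1}" for y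
    by (rule has_integral_0_cbox_imp_0[OF _ _ f0]) (use cf that in \<open>auto simp: f_def\<close>)
  then have "h (frac x) = 0" using frac_ge_0[of x] frac_lt_1[of x] by (simp add: f_def)
  then show ?thesis using cont_periodic_frac[OF h] by simp
qed

lemma fourier_coeff_zero_imp_zero:
  assumes "cont_periodic h" and "\<And>m. fourier_coeff h m = 0"
  shows "h x = 0"
  using integral_norm_sq_zero_imp_zero[OF assms(1) fourier_coeff_zero_imp_integral_norm_sq_zero[OF assms]] .

lemma sum_int_symmetric: "(\<Sum>k\<in>{-int n..int n}. g k) = g 0 + (\<Sum>k\<in>{1..n}. g (int k) + g (- int k))"
proof (induction n)
  case 0 then show ?case by simp
next
  case (Suc n)
  have "{-int (Suc n)..int (Suc n)} = insert (int (Suc n)) (insert (- int (Suc n)) {-int n..int n})"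
    by auto
  then have "(\<Sum>k\<in>{-int (Suc n)..int (Suc n)}. g k) = g (int (Suc n)) + (g (- int (Suc n)) + (\<Sum>k\<in>{-int n..int n}. g k))"
    by simp
  then show ?case using Suc by (simp add: algebra_simps)
qed

locale dual_cocycle =
  fixes d :: nat and vh :: "int \<Rightarrow> complex" and E :: real and \<alpha> :: real
  assumes d_ge_1: "1 \<le> d" and vh_d_nonzero: "vh (int d) \<noteq> 0"
    and vh_hermitian: "\<And>k. \<bar>k\<bar> \<le> int d \<Longrightarrow> vh (-k) = cnj (vh k)"
begin

abbreviation L :: "real \<Rightarrow> nat \<Rightarrow> nat \<Rightarrow> complex" where "L \<equiv> dualL d vh E"

lemma dualL_row0:
  "mvmult (2*d) (L \<theta>) X 0 * vh (int d) =
     complex_of_real (E - 2 * cos (2*pi*\<theta>)) * X (d-1) - (\<Sum>k\<in>{-int d..int d - 1}. vh k * X (nat (int d - 1 - k)))"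
proof -
  have "mvmult (2*d) (L \<theta>) X 0 = (\<Sum>j<2*d. L \<theta> 0 j * X j)"
    using d_ge_1 by (simp add: mvmult_def)
  also have "\<dots> = (\<Sum>k\<in>{-int d..int d - 1}. L \<theta> 0 (nat (int d - 1 - k)) * X (nat (int d - 1 - k)))"
    by (rule sum.reindex_bij_witness[where i="\<lambda>k. nat (int d - 1 - k)" and j="\<lambda>j. int d - 1 - int j"]) auto
  finally have reindex: "mvmult (2*d) (L \<theta>) X 0 * vh (int d) =
      (\<Sum>k\<in>{-int d..int d - 1}. L \<theta> 0 (nat (int d - 1 - k)) * vh (int d) * X (nat (int d - 1 - k)))"
    by (simp add: sum_distrib_right sum_distrib_left algebra_simps)
  have entry: "L \<theta> 0 (nat (int d - 1 - k)) * vh (int d) * X (nat (int d - 1 - k)) =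
      - (vh k * X (nat (int d - 1 - k))) + (if k = 0 then complex_of_real (E - 2 * cos (2*pi*\<theta>)) * X (d-1) else 0)"
    if "k \<in> {-int d..int d - 1}" for k
  proof -
    have a: "nat (int d - 1 - k) < 2*d" using that by auto
    have b: "int d - 1 - int (nat (int d - 1 - k)) = k" using that by auto
    show ?thesis
      using a b vh_d_nonzero d_ge_1 by (auto simp: dualL_def Let_def field_simps nat_diff_distrib)
  qed
  have delta: "(\<Sum>k\<in>{-int d..int d - 1}. (if k = 0 then complex_of_real (E - 2 * cos (2*pi*\<theta>)) * X (d-1) else 0))
     = complex_of_real (E - 2 * cos (2*pi*\<theta>)) * X (d-1)"
    using d_ge_1 by (simp add: sum.delta)
  have termwise: "(\<Sum>k\<in>{-int d..int d - 1}. L \<theta> 0 (nat (int d - 1 - k)) * vh (int d) * X (nat (int d - 1 - k)))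
     = (\<Sum>k\<in>{-int d..int d - 1}. - (vh k * X (nat (int d - 1 - k))) + (if k = 0 then complex_of_real (E - 2 * cos (2*pi*\<theta>)) * X (d-1) else 0))"
    by (rule sum.cong) (auto simp only: entry)
  show ?thesis
    unfolding reindex termwise sum.distrib delta by (simp add: sum_negf)
qed

lemma dualL_row_shift: "1 \<le> i \<Longrightarrow> i < 2*d \<Longrightarrow> mvmult (2*d) (L \<theta>) X i = X (i - 1)"
proof -
  assume i: "1 \<le> i" "i < 2*d"
  have "mvmult (2*d) (L \<theta>) X i = (\<Sum>j<2*d. (if j = i - 1 then 1 else 0) * X j)"
    using i by (auto simp: mvmult_def dualL_def intro!: sum.cong)
  also have "\<dots> = (\<Sum>j<2*d. (if j = i - 1 then X j else 0))"
    by (rule sum.cong) auto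
  also have "\<dots> = X (i - 1)" using i by (simp add: sum.delta')
  finally show ?thesis .
qed

lemma dualL_injective: "X \<in> cvec (2*d) \<Longrightarrow> mvmult (2*d) (L \<theta>) X = (\<lambda>i. 0) \<Longrightarrow> X = (\<lambda>i. 0)"
proof -
  assume X: "X \<in> cvec (2*d)" and z: "mvmult (2*d) (L \<theta>) X = (\<lambda>i. 0)"
  have low: "X j = 0" if "j < 2*d - 1" for j
    using dualL_row_shift[of "j+1" \<theta> X] z that d_ge_1 by (auto dest: fun_cong[where x="j+1"])
  have "mvmult (2*d) (L \<theta>) X 0 = (\<Sum>j<2*d. L \<theta> 0 j * X j)"
    using d_ge_1 by (simp add: mvmult_def)
  also have "\<dots> = (\<Sum>j<Suc (2*d-1). L \<theta> 0 j * X j)" using d_ge_1 by simp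
  also have "\<dots> = L \<theta> 0 (2*d-1) * X (2*d-1)"
    by (simp add: low)
  also have "\<dots> = - vh (- int d) / vh (int d) * X (2*d-1)"
  proof -
    have "int d - 1 - int (2 * d - 1) = - int d" using d_ge_1 by (simp add: of_nat_diff)
    then show ?thesis using d_ge_1 by (simp add: dualL_def Let_def)
  qed
  finally have "- vh (- int d) / vh (int d) * X (2*d-1) = 0" using z by (metis)
  moreover have "vh (- int d) \<noteq> 0" using vh_hermitian[of "int d"] vh_d_nonzero by simp
  ultimately have top: "X (2*d-1) = 0" using vh_d_nonzero by simp
  show ?thesis
  proof
    fix i show "X i = 0"
    proof (cases "i < 2*d - 1")
      case True then show ?thesis by (rule low)
    next
      case False
      then have "i = 2*d-1 \<or> i \<ge> 2*d" by auto
      then show ?thesis using top X by (auto simp: cvec_def)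
    qed
  qed
qed

lemma cocycle_iter_dualL_injective: "X \<in> cvec (2*d) \<Longrightarrow> cocycle_iter (2*d) \<alpha> L n \<theta> X = (\<lambda>i. 0) \<Longrightarrow> X = (\<lambda>i. 0)"
proof (induction n)
  case 0 then show ?case by simp
next
  case (Suc n)
  then have "cocycle_iter (2*d) \<alpha> L n \<theta> X = (\<lambda>i. 0)"
    using dualL_injective cocycle_iter_cvec by (metis cocycle_iter.simps(2))
  then show ?case using Suc by blast
qed

definition window :: "(int \<Rightarrow> complex) \<Rightarrow> int \<Rightarrow> nat \<Rightarrow> complex" where
  "window u n = (\<lambda>i. if i < 2*d then u (n + int d - 1 - int i) else 0)"

definition dual_eq :: "(int \<Rightarrow> complex) \<Rightarrow> int \<Rightarrow> bool" where
  "dual_eq u n \<longleftrightarrow> (\<Sum>k\<in>{-int d..int d}. vh k * u (n+k)) + complex_of_real (2 * cos (2*pi*(of_int n * \<alpha>))) * u n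
     = complex_of_real E * u n"

lemma window_cvec[simp]: "window u n \<in> cvec (2*d)"
  by (auto simp: window_def cvec_def)

lemma window_step:
  assumes "dual_eq u n"
  shows "mvmult (2*d) (L (of_int n * \<alpha>)) (window u n) = window u (n+1)"
proof
  fix i
  show "mvmult (2*d) (L (of_int n * \<alpha>)) (window u n) i = window u (n+1) i"
  proof (cases "i = 0")
    case True
    let ?X = "window u n"
    have x1: "?X (d-1) = u n" using d_ge_1 by (simp add: window_def of_nat_diff)
    have x2: "(\<Sum>k\<in>{-int d..int d - 1}. vh k * ?X (nat (int d - 1 - k))) = (\<Sum>k\<in>{-int d..int d - 1}. vh k * u (n + k))"
      by (rule sum.cong) (auto simp: window_def)
    have split: "{-int d..int d} = insert (int d) {-int d..int d - 1}" by auto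
    have r: "(\<Sum>k\<in>{-int d..int d - 1}. vh k * u (n+k)) + vh (int d) * u (n + int d)
       + complex_of_real (2 * cos (2*pi*(of_int n * \<alpha>))) * u n = complex_of_real E * u n"
      using assms unfolding dual_eq_def split by (simp add: algebra_simps)
    have "mvmult (2*d) (L (of_int n * \<alpha>)) ?X 0 * vh (int d) = vh (int d) * u (n + int d)"
      unfolding dualL_row0 x1 x2 using r by (simp add: algebra_simps)
    then have "mvmult (2*d) (L (of_int n * \<alpha>)) ?X 0 = u (n + int d)"
      using vh_d_nonzero by (simp add: field_simps)
    then show ?thesis using True d_ge_1 by (simp add: window_def)
  next
    case False
    show ?thesis
    proof (cases "i < 2*d")
      case True
      then show ?thesis using False dualL_row_shift[of i] by (auto simp: window_def of_nat_diff algebra_simps)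
    next
      case False
      then show ?thesis by (simp add: window_def mvmult_def)
    qed
  qed
qed

lemma cocycle_iter_window:
  assumes "\<And>n. dual_eq u n"
  shows "cocycle_iter (2*d) \<alpha> L j (of_int n * \<alpha>) (window u n) = window u (n + int j)"
proof (induction j)
  case 0 then show ?case by simp
next
  case (Suc j)
  have "of_int n * \<alpha> + real j * \<alpha> = of_int (n + int j) * \<alpha>" by (simp add: algebra_simps)
  then show ?case using Suc window_step[OF assms, of "n + int j"] by (simp add: algebra_simps)
qed

text \<open>\<open>\<omega>\<close>, a discrete Wronskian of the dual equation on state vectors; \<open>hform_seq N\<close> is the same
  sum on sequences around position \<open>N\<close> (\<open>hform_eq_hform_seq\<close>).\<close>
definition hform :: "(nat \<Rightarrow> complex) \<Rightarrow> (nat \<Rightarrow> complex) \<Rightarrow> complex" where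
  "hform X Y = (\<Sum>k\<in>{1..d}. \<Sum>j<k. vh (int k) * X (d-k+j) * cnj (Y (d+j)) - cnj (vh (int k)) * cnj (Y (d-k+j)) * X (d+j))"

definition hform_seq :: "int \<Rightarrow> (int \<Rightarrow> complex) \<Rightarrow> (int \<Rightarrow> complex) \<Rightarrow> complex" where
  "hform_seq N u w = (\<Sum>k\<in>{1..d}. \<Sum>j<k. vh (int k) * u (N - int j + int k) * cnj (w (N - int j))
       - cnj (vh (int k)) * cnj (w (N - int j + int k)) * u (N - int j))"

lemma hform_eq_hform_seq: "hform X Y = hform_seq 0 (\<lambda>t. X (nat (int d - t))) (\<lambda>t. Y (nat (int d - t)))"
  unfolding hform_def hform_seq_def
proof (intro sum.cong refl)
  fix k j assume k: "k \<in> {1..d}" and j: "j \<in> {..<k}"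
  have a: "nat (int d - (0 - int j + int k)) = d - k + j" using k j by auto
  have b: "nat (int d - (0 - int j)) = d + j" by auto
  show "vh (int k) * X (d-k+j) * cnj (Y (d+j)) - cnj (vh (int k)) * cnj (Y (d-k+j)) * X (d+j) =
    vh (int k) * X (nat (int d - (0 - int j + int k))) * cnj (Y (nat (int d - (0 - int j)))) -
    cnj (vh (int k)) * cnj (Y (nat (int d - (0 - int j + int k)))) * X (nat (int d - (0 - int j)))"
    unfolding a b ..
qed

lemma hform_seq_shift: "hform_seq (N+1) u w = hform_seq N (\<lambda>t. u (t+1)) (\<lambda>t. w (t+1))"
  unfolding hform_seq_def by (simp add: algebra_simps)

lemma hform_seq_cong:
  assumes "\<And>t. N - int d + 1 \<le> t \<Longrightarrow> t \<le> N + int d \<Longrightarrow> u t = u' t \<and> w t = w' t"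
  shows "hform_seq N u w = hform_seq N u' w'"
  unfolding hform_seq_def
proof (intro sum.cong refl)
  fix k j assume k: "k \<in> {1..d}" and j: "j \<in> {..<k}"
  have "u (N - int j + int k) = u' (N - int j + int k)" "w (N - int j + int k) = w' (N - int j + int k)"
    "u (N - int j) = u' (N - int j)" "w (N - int j) = w' (N - int j)"
    using assms[of "N - int j + int k"] assms[of "N - int j"] k j by auto
  then show "vh (int k) * u (N - int j + int k) * cnj (w (N - int j)) - cnj (vh (int k)) * cnj (w (N - int j + int k)) * u (N - int j) =
     vh (int k) * u' (N - int j + int k) * cnj (w' (N - int j)) - cnj (vh (int k)) * cnj (w' (N - int j + int k)) * u' (N - int j)"
    by simp
qed

lemma hform_seq_diff: "hform_seq N u w - hform_seq (N-1) u w =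
   cnj (w N) * (\<Sum>k\<in>{1..d}. vh (int k) * u (N + int k) + cnj (vh (int k)) * u (N - int k))
   - u N * cnj (\<Sum>k\<in>{1..d}. vh (int k) * w (N + int k) + cnj (vh (int k)) * w (N - int k))"
proof -
  define f where "f k m = vh (int k) * u (m + int k) * cnj (w m) - cnj (vh (int k)) * cnj (w (m + int k)) * u m" for k m
  have "hform_seq N u w = (\<Sum>k\<in>{1..d}. \<Sum>j<k. f k (N - int j))"
    unfolding hform_seq_def f_def by (simp add: algebra_simps)
  moreover have "hform_seq (N-1) u w = (\<Sum>k\<in>{1..d}. \<Sum>j<k. f k (N - int (Suc j)))"
    unfolding hform_seq_def f_def by (simp add: algebra_simps)
  ultimately have "hform_seq N u w - hform_seq (N-1) u w = (\<Sum>k\<in>{1..d}. \<Sum>j<k. f k (N - int j) - f k (N - int (Suc j)))"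
    by (simp add: sum_subtractf)
  also have "\<dots> = (\<Sum>k\<in>{1..d}. f k N - f k (N - int k))"
    by (subst sum_lessThan_telescope'[where f="\<lambda>j. f _ (N - int j)"]) simp
  also have "\<dots> = (\<Sum>k\<in>{1..d}. cnj (w N) * (vh (int k) * u (N + int k) + cnj (vh (int k)) * u (N - int k))
       - u N * cnj (vh (int k) * w (N + int k) + cnj (vh (int k)) * w (N - int k)))"
    by (rule sum.cong) (auto simp: f_def algebra_simps)
  finally show ?thesis by (simp add: sum_subtractf sum_distrib_left)
qed

lemma sum_dual_symmetric: "(\<Sum>k\<in>{1..d}. vh (int k) * u (N + int k) + cnj (vh (int k)) * u (N - int k))
   = (\<Sum>k\<in>{-int d..int d}. vh k * u (N + k)) - vh 0 * u N"
proof -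
  have "(\<Sum>k\<in>{-int d..int d}. vh k * u (N + k)) = vh 0 * u N + (\<Sum>k\<in>{1..d}. vh (int k) * u (N + int k) + vh (- int k) * u (N + - int k))"
    by (subst sum_int_symmetric) simp
  also have "(\<Sum>k\<in>{1..d}. vh (int k) * u (N + int k) + vh (- int k) * u (N + - int k))
     = (\<Sum>k\<in>{1..d}. vh (int k) * u (N + int k) + cnj (vh (int k)) * u (N - int k))"
    by (rule sum.cong) (auto simp: vh_hermitian)
  finally show ?thesis by simp
qed

lemma vh0_real: "cnj (vh 0) = vh 0"
  using vh_hermitian[of 0] by simp

text \<open>The sequence read off a state vector \<open>Z\<close> (entry \<open>Z i\<close> sits at position \<open>d - i\<close>), extended
  at position \<open>d + 1\<close> by the new entry that \<open>L \<theta>\<close> computes.\<close>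
definition ext_seq :: "real \<Rightarrow> (nat \<Rightarrow> complex) \<Rightarrow> int \<Rightarrow> complex" where
  "ext_seq \<theta> Z t = (if t = int d + 1 then mvmult (2*d) (L \<theta>) Z 0 else Z (nat (int d - t)))"

lemma ext_seq_dual_eq:
  "(\<Sum>k\<in>{1..d}. vh (int k) * ext_seq \<theta> Z (1 + int k) + cnj (vh (int k)) * ext_seq \<theta> Z (1 - int k))
    = (complex_of_real (E - 2 * cos (2*pi*\<theta>)) - vh 0) * ext_seq \<theta> Z 1"
proof -
  let ?q = "ext_seq \<theta> Z"
  have split: "{-int d..int d} = insert (int d) {-int d..int d - 1}" by auto
  have "(\<Sum>k\<in>{-int d..int d - 1}. vh k * ?q (1 + k)) = (\<Sum>k\<in>{-int d..int d - 1}. vh k * Z (nat (int d - 1 - k)))"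
    by (rule sum.cong) (auto simp: ext_seq_def diff_diff_eq)
  then have e1: "(\<Sum>k\<in>{-int d..int d}. vh k * ?q (1 + k)) =
     (\<Sum>k\<in>{-int d..int d - 1}. vh k * Z (nat (int d - 1 - k))) + vh (int d) * mvmult (2*d) (L \<theta>) Z 0"
    unfolding split by (simp add: ext_seq_def)
  have q1: "?q 1 = Z (d - 1)" using d_ge_1 by (simp add: ext_seq_def nat_diff_distrib)
  have "(\<Sum>k\<in>{1..d}. vh (int k) * ?q (1 + int k) + cnj (vh (int k)) * ?q (1 - int k))
      = (\<Sum>k\<in>{-int d..int d}. vh k * ?q (1 + k)) - vh 0 * ?q 1" by (rule sum_dual_symmetric)
  also have "\<dots> = (complex_of_real (E - 2 * cos (2*pi*\<theta>)) - vh 0) * ?q 1"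
    unfolding e1 q1 using dualL_row0[of \<theta> Z] by (simp add: algebra_simps)
  finally show ?thesis .
qed

lemma ext_seq_dualL:
  assumes "1 - int d \<le> t" "t \<le> int d"
  shows "mvmult (2*d) (L \<theta>) Z (nat (int d - t)) = ext_seq \<theta> Z (t + 1)"
proof (cases "t = int d")
  case False
  then have a: "1 \<le> nat (int d - t)" "nat (int d - t) < 2*d" using assms by auto
  have "nat (int d - t) - 1 = nat (int d - (t + 1))" using assms False by auto
  then show ?thesis using False dualL_row_shift[OF a] by (simp add: ext_seq_def)
qed (simp add: ext_seq_def)

text \<open>Conservation of \<open>\<omega>\<close>: by \<open>hform_seq_diff\<close> a step changes it by a boundary term which
  vanishes because the extended sequences satisfy the dual equation with the real coefficient
  \<open>E - 2 cos(2\<pi>\<theta>) - v\<^sub>0\<close>.\<close>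
lemma hform_dualL: "hform (mvmult (2*d) (L \<theta>) X) (mvmult (2*d) (L \<theta>) Y) = hform X Y"
proof -
  let ?s = "ext_seq \<theta> X" and ?r = "ext_seq \<theta> Y"
  define c where "c = complex_of_real (E - 2 * cos (2*pi*\<theta>)) - vh 0"
  have cr: "cnj c = c" by (simp add: c_def vh0_real)
  have "hform (mvmult (2*d) (L \<theta>) X) (mvmult (2*d) (L \<theta>) Y) = hform_seq 0 (\<lambda>t. ?s (t+1)) (\<lambda>t. ?r (t+1))"
    unfolding hform_eq_hform_seq by (rule hform_seq_cong) (simp add: ext_seq_dualL)
  also have "\<dots> = hform_seq 1 ?s ?r" using hform_seq_shift[of 0 ?s ?r] by simp
  also have "\<dots> = hform_seq 0 ?s ?r
      + (cnj (?r 1) * (\<Sum>k\<in>{1..d}. vh (int k) * ?s (1 + int k) + cnj (vh (int k)) * ?s (1 - int k))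
         - ?s 1 * cnj (\<Sum>k\<in>{1..d}. vh (int k) * ?r (1 + int k) + cnj (vh (int k)) * ?r (1 - int k)))"
    using hform_seq_diff[of 1 ?s ?r] by (simp add: algebra_simps)
  also have "\<dots> = hform_seq 0 ?s ?r + (cnj (?r 1) * (c * ?s 1) - ?s 1 * cnj (c * ?r 1))"
    unfolding ext_seq_dual_eq c_def ..
  also have "\<dots> = hform_seq 0 ?s ?r" using cr by (simp add: algebra_simps)
  also have "\<dots> = hform X Y"
    unfolding hform_eq_hform_seq by (rule hform_seq_cong) (auto simp: ext_seq_def)
  finally show ?thesis .
qed

lemma hform_cocycle_iter: "hform (cocycle_iter (2*d) \<alpha> L n \<theta> X) (cocycle_iter (2*d) \<alpha> L n \<theta> Y) = hform X Y"
  by (induction n) (auto simp: hform_dualL)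

definition hform_const where "hform_const = (\<Sum>k\<in>{1..d}. \<Sum>j<k. 2 * cmod (vh (int k)))"

lemma hform_bound: "cmod (hform X Y) \<le> hform_const * vnorm (2*d) X * vnorm (2*d) Y"
proof -
  have "cmod (hform X Y) \<le> (\<Sum>k\<in>{1..d}. cmod (\<Sum>j<k. vh (int k) * X (d-k+j) * cnj (Y (d+j)) - cnj (vh (int k)) * cnj (Y (d-k+j)) * X (d+j)))"
    unfolding hform_def by (rule norm_sum)
  also have "\<dots> \<le> (\<Sum>k\<in>{1..d}. \<Sum>j<k. 2 * cmod (vh (int k)) * vnorm (2*d) X * vnorm (2*d) Y)"
  proof (rule sum_mono)
    fix k assume k: "k \<in> {1..d}"
    have "cmod (\<Sum>j<k. vh (int k) * X (d-k+j) * cnj (Y (d+j)) - cnj (vh (int k)) * cnj (Y (d-k+j)) * X (d+j))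
       \<le> (\<Sum>j<k. cmod (vh (int k) * X (d-k+j) * cnj (Y (d+j)) - cnj (vh (int k)) * cnj (Y (d-k+j)) * X (d+j)))"
      by (rule norm_sum)
    also have "\<dots> \<le> (\<Sum>j<k. 2 * cmod (vh (int k)) * vnorm (2*d) X * vnorm (2*d) Y)"
    proof (rule sum_mono)
      fix j assume j: "j \<in> {..<k}"
      have i1: "d-k+j < 2*d" "d+j < 2*d" using k j by auto
      have bX: "cmod (X (d-k+j)) \<le> vnorm (2*d) X" "cmod (X (d+j)) \<le> vnorm (2*d) X"
        using i1 by (auto intro: norm_le_vnorm)
      have bY: "cmod (Y (d-k+j)) \<le> vnorm (2*d) Y" "cmod (Y (d+j)) \<le> vnorm (2*d) Y"
        using i1 by (auto intro: norm_le_vnorm)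
      have "cmod (vh (int k) * X (d-k+j) * cnj (Y (d+j)) - cnj (vh (int k)) * cnj (Y (d-k+j)) * X (d+j))
         \<le> cmod (vh (int k)) * cmod (X (d-k+j)) * cmod (Y (d+j)) + cmod (vh (int k)) * cmod (Y (d-k+j)) * cmod (X (d+j))"
        by (rule order_trans[OF norm_triangle_ineq4]) (simp add: norm_mult)
      also have "\<dots> \<le> cmod (vh (int k)) * vnorm (2*d) X * vnorm (2*d) Y + cmod (vh (int k)) * vnorm (2*d) Y * vnorm (2*d) X"
        by (intro add_mono mult_mono bX bY mult_nonneg_nonneg) auto
      finally show "cmod (vh (int k) * X (d-k+j) * cnj (Y (d+j)) - cnj (vh (int k)) * cnj (Y (d-k+j)) * X (d+j))
         \<le> 2 * cmod (vh (int k)) * vnorm (2*d) X * vnorm (2*d) Y" by (simp add: algebra_simps)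
    qed
    finally show "cmod (\<Sum>j<k. vh (int k) * X (d-k+j) * cnj (Y (d+j)) - cnj (vh (int k)) * cnj (Y (d-k+j)) * X (d+j))
       \<le> (\<Sum>j<k. 2 * cmod (vh (int k)) * vnorm (2*d) X * vnorm (2*d) Y)" .
  qed
  also have "\<dots> = (\<Sum>k\<in>{1..d}. \<Sum>j<k. 2 * cmod (vh (int k))) * (vnorm (2*d) X * vnorm (2*d) Y)"
    by (simp only: sum_distrib_right mult.assoc)
  finally show ?thesis unfolding hform_const_def by (simp add: mult.assoc)
qed

lemma hform_const_nonneg: "hform_const \<ge> 0" unfolding hform_const_def by (auto intro: sum_nonneg)

definition hform_low :: "(nat \<Rightarrow> complex) \<Rightarrow> nat \<Rightarrow> complex" where
  "hform_low Z j = (\<Sum>k\<in>{Suc j..d}. vh (int k) * Z (d - k + j))"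

text \<open>\<open>d\<close> linear functionals that together with \<open>\<omega>(Z, Z) = 0\<close> force \<open>Z = 0\<close>
  (\<open>isotropic_test_kernel\<close>); this bounds the dimension of \<open>\<omega>\<close>-isotropic subspaces by \<open>d\<close>.\<close>
definition isotropy_test :: "(nat \<Rightarrow> complex) \<Rightarrow> nat \<Rightarrow> complex" where
  "isotropy_test Z = (\<lambda>j. if j < d then hform_low Z j + \<i> * Z (d + j) else 0)"

lemma isotropy_test_cvec: "isotropy_test Z \<in> cvec d"
  by (auto simp: isotropy_test_def cvec_def)

lemma isotropy_test_sum:
  "isotropy_test (\<lambda>t. \<Sum>i\<in>I. c i * X i t) j = (\<Sum>i\<in>I. c i * isotropy_test (X i) j)"
proof (cases "j < d")
  case True
  have "hform_low (\<lambda>t. \<Sum>i\<in>I. c i * X i t) j = (\<Sum>k\<in>{Suc j..d}. \<Sum>i\<in>I. c i * (vh (int k) * X i (d - k + j)))"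
    by (simp add: hform_low_def sum_distrib_left mult_ac)
  also have "\<dots> = (\<Sum>i\<in>I. c i * hform_low (X i) j)"
    by (subst sum.swap) (simp add: hform_low_def sum_distrib_left)
  finally show ?thesis using True by (simp add: isotropy_test_def algebra_simps sum.distrib sum_distrib_left)
qed (simp add: isotropy_test_def)

lemma hform_swap: "hform X Y = (\<Sum>j<d. \<Sum>k\<in>{Suc j..d}. vh (int k) * X (d-k+j) * cnj (Y (d+j)) - cnj (vh (int k)) * cnj (Y (d-k+j)) * X (d+j))"
proof -
  have a: "{..<k} = {j. j \<in> {..<d} \<and> j < k}" if "k \<in> {1..d}" for k using that by auto
  have b: "{Suc j..d} = {k. k \<in> {1..d} \<and> j < k}" if "j \<in> {..<d}" for j using that by auto
  define f where "f k j = vh (int k) * X (d-k+j) * cnj (Y (d+j)) - cnj (vh (int k)) * cnj (Y (d-k+j)) * X (d+j)" for k j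
  have "(\<Sum>k\<in>{1..d}. \<Sum>j<k. f k j) = (\<Sum>k\<in>{1..d}. \<Sum>j\<in>{j. j \<in> {..<d} \<and> j < k}. f k j)"
    by (rule sum.cong[OF refl], rule sum.cong[OF a]) auto
  also have "\<dots> = (\<Sum>j\<in>{..<d}. \<Sum>k\<in>{k. k \<in> {1..d} \<and> j < k}. f k j)"
    by (rule sum.swap_restrict) auto
  also have "\<dots> = (\<Sum>j<d. \<Sum>k\<in>{Suc j..d}. f k j)"
    by (rule sum.cong[OF refl], rule sum.cong[OF b[symmetric]]) auto
  finally show ?thesis unfolding hform_def f_def .
qed

lemma hform_diag: "hform Z Z = (\<Sum>j<d. hform_low Z j * cnj (Z (d + j)) - cnj (hform_low Z j) * Z (d + j))"
  unfolding hform_swap hform_low_def by (simp add: sum_distrib_right sum_subtractf)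

lemma isotropic_test_kernel_high:
  assumes R: "isotropy_test Z = (\<lambda>j. 0)" and O: "hform Z Z = 0" and j: "j < d"
  shows "Z (d + j) = 0"
proof -
  have pq: "hform_low Z j = - \<i> * Z (d + j)" if "j < d" for j
    using fun_cong[OF R, of j] that by (simp add: isotropy_test_def algebra_simps add_eq_0_iff)
  have "hform Z Z = (\<Sum>j<d. - 2 * \<i> * complex_of_real ((cmod (Z (d + j)))\<^sup>2))"
    unfolding hform_diag
  proof (rule sum.cong[OF refl])
    fix j assume "j \<in> {..<d}"
    then have "hform_low Z j * cnj (Z (d + j)) - cnj (hform_low Z j) * Z (d + j) = - 2 * \<i> * (Z (d + j) * cnj (Z (d + j)))"
      using pq by (simp add: algebra_simps)
    then show "hform_low Z j * cnj (Z (d + j)) - cnj (hform_low Z j) * Z (d + j)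
        = - 2 * \<i> * complex_of_real ((cmod (Z (d + j)))\<^sup>2)"
      by (simp only: complex_norm_square)
  qed
  also have "\<dots> = - 2 * \<i> * complex_of_real (\<Sum>j<d. (cmod (Z (d + j)))\<^sup>2)"
    by (simp add: sum_distrib_left)
  finally have "(- 2 * \<i>) * complex_of_real (\<Sum>j<d. (cmod (Z (d + j)))\<^sup>2) = 0" using O by metis
  then have "complex_of_real (\<Sum>j<d. (cmod (Z (d + j)))\<^sup>2) = 0"
    by (metis mult_eq_0_iff complex_i_not_zero neg_equal_0_iff_equal zero_neq_numeral)
  then have "(\<Sum>j<d. (cmod (Z (d + j)))\<^sup>2) = 0" using of_real_eq_0_iff by blast
  then show ?thesis using j by (subst (asm) sum_nonneg_eq_0_iff) auto
qed

text \<open>\<open>hform_low Z\<close> is triangular in the entries \<open>Z 0, \<dots>, Z (d - 1)\<close>, with diagonal \<open>v\<^sub>d \<noteq> 0\<close>.\<close>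
lemma hform_low_zero_imp_low:
  assumes p0: "\<And>j. j < d \<Longrightarrow> hform_low Z j = 0" and i: "i < d"
  shows "Z i = 0"
proof -
  have "\<forall>i. n \<le> i \<and> i < d \<longrightarrow> Z i = 0" if "n \<le> d" for n
    using that
  proof (induction n rule: inc_induct)
    case base
    then show ?case by auto
  next
    case (step n)
    have "(\<Sum>k\<in>{Suc n..d-1}. vh (int k) * Z (d - k + n)) = 0"
    proof (intro sum.neutral ballI)
      fix k assume "k \<in> {Suc n..d-1}"
      then have "Suc n \<le> d - k + n" "d - k + n < d" by auto
      then show "vh (int k) * Z (d - k + n) = 0" using step.IH by auto
    qed
    moreover have "{Suc n..d} = insert d {Suc n..d-1}" "d \<notin> {Suc n..d-1}" using step by auto
    ultimately have "hform_low Z n = vh (int d) * Z n" unfolding hform_low_def by simp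
    then have "Z n = 0" using p0[of n] step vh_d_nonzero by simp
    then show ?case using step.IH by (metis Suc_leI le_neq_implies_less)
  qed
  then show ?thesis using i by blast
qed

lemma isotropic_test_kernel:
  assumes Z: "Z \<in> cvec (2*d)" and R: "isotropy_test Z = (\<lambda>j. 0)" and O: "hform Z Z = 0"
  shows "Z = (\<lambda>i. 0)"
proof
  fix i
  have high: "Z (d + j) = 0" if "j < d" for j using isotropic_test_kernel_high[OF R O that] .
  have "hform_low Z j = 0" if "j < d" for j
    using fun_cong[OF R, of j] high[OF that] that by (simp add: isotropy_test_def)
  then have low: "Z i = 0" if "i < d" for i using hform_low_zero_imp_low that by blast
  show "Z i = 0"
  proof (cases "i < d")
    case False
    then consider "i < 2*d" | "i \<ge> 2*d" by linarith
    then show ?thesis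
    proof cases
      case 1
      then show ?thesis using high[of "i - d"] False by simp
    qed (use Z in \<open>simp add: cvec_def\<close>)
  qed (rule low)
qed

lemma isotropic_family_dependent:
  assumes fin: "finite I" and card: "card I > d" and X: "\<forall>i\<in>I. X i \<in> cvec (2*d)"
    and iso: "\<And>c. hform (\<lambda>t. \<Sum>i\<in>I. c i * X i t) (\<lambda>t. \<Sum>i\<in>I. c i * X i t) = 0"
  shows "\<exists>c. (\<exists>i\<in>I. c i \<noteq> 0) \<and> (\<lambda>t. \<Sum>i\<in>I. c i * X i t) = (\<lambda>t. 0)"
proof -
  obtain c where c: "\<exists>i\<in>I. c i \<noteq> 0" "\<And>t. (\<Sum>i\<in>I. c i * isotropy_test (X i) t) = 0"
    using cvec_dependent[OF fin card, of "\<lambda>i. isotropy_test (X i)"] isotropy_test_cvec by auto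
  define Z where "Z = (\<lambda>t. \<Sum>i\<in>I. c i * X i t)"
  have Zc: "Z \<in> cvec (2*d)" using X by (auto simp: Z_def cvec_def intro!: sum.neutral)
  have "isotropy_test Z = (\<lambda>j. 0)" unfolding Z_def by (rule ext) (simp add: isotropy_test_sum c(2))
  then have "Z = (\<lambda>i. 0)" using isotropic_test_kernel[OF Zc] iso[of c] by (simp add: Z_def)
  then show ?thesis using c(1) by (auto simp: Z_def)
qed

lemma hform_eq_0_if_small:
  assumes "\<And>\<epsilon>. \<epsilon> > 0 \<Longrightarrow> \<exists>V. hform Z Z = hform V V \<and> vnorm (2*d) V < \<epsilon>"
  shows "hform Z Z = 0"
proof (rule ccontr)
  assume nz: "hform Z Z \<noteq> 0"
  define \<delta> where "\<delta> = cmod (hform Z Z)"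
  have dp: "\<delta> > 0" using nz by (simp add: \<delta>_def)
  define \<epsilon> where "\<epsilon> = min 1 (\<delta> / (hform_const + 1))"
  have ep: "\<epsilon> > 0" using dp hform_const_nonneg by (simp add: \<epsilon>_def)
  obtain V where V: "hform Z Z = hform V V" "vnorm (2*d) V < \<epsilon>" using assms[OF ep] by blast
  have "\<delta> \<le> hform_const * vnorm (2*d) V * vnorm (2*d) V" unfolding \<delta>_def V(1) by (rule hform_bound)
  also have "\<dots> \<le> hform_const * \<epsilon> * \<epsilon>"
    using V(2) hform_const_nonneg ep by (intro mult_mono) (auto intro: mult_left_mono)
  also have "\<dots> \<le> hform_const * \<epsilon> * 1"
    using hform_const_nonneg ep by (intro mult_left_mono) (auto simp: \<epsilon>_def)
  also have "\<dots> = hform_const * \<epsilon>" by simp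
  also have "\<dots> < \<delta>"
  proof -
    have "hform_const * \<epsilon> \<le> hform_const * (\<delta> / (hform_const + 1))" using hform_const_nonneg by (intro mult_left_mono) (auto simp: \<epsilon>_def)
    also have "\<dots> < \<delta>" using dp hform_const_nonneg by (simp add: field_simps)
    finally show ?thesis .
  qed
  finally show False by simp
qed

lemma dual_eq_lincomb:
  assumes "dual_eq u n" "dual_eq w n"
  shows "dual_eq (\<lambda>t. x * u t + y * w t) n"
proof -
  let ?c = "complex_of_real (2 * cos (2*pi*(of_int n * \<alpha>)))"
  have s: "(\<Sum>k\<in>{-int d..int d}. vh k * (x * u (n+k) + y * w (n+k))) =
     x * (\<Sum>k\<in>{-int d..int d}. vh k * u (n+k)) + y * (\<Sum>k\<in>{-int d..int d}. vh k * w (n+k))"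
    by (simp add: algebra_simps sum.distrib sum_distrib_left)
  have "x * ((\<Sum>k\<in>{-int d..int d}. vh k * u (n+k)) + ?c * u n) + y * ((\<Sum>k\<in>{-int d..int d}. vh k * w (n+k)) + ?c * w n)
     = x * (complex_of_real E * u n) + y * (complex_of_real E * w n)"
    using assms unfolding dual_eq_def by simp
  then show ?thesis unfolding dual_eq_def s by (simp add: algebra_simps)
qed

lemma window_lincomb: "window (\<lambda>t. x * u t + y * w t) n = (\<lambda>i. x * window u n i + y * window w n i)"
  by (auto simp: window_def)

lemma window_zero_everywhere:
  assumes r: "\<And>n. dual_eq z n" and z0: "window z 0 = (\<lambda>i. 0)"
  shows "window z n = (\<lambda>i. 0)"
proof (induction n rule: int_induct[where k=0])
  case base then show ?case by (rule z0)
next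
  case (step1 i)
  then show ?case using window_step[OF r, of i] by simp
next
  case (step2 i)
  have "mvmult (2*d) (L (of_int (i - 1) * \<alpha>)) (window z (i - 1)) = window z i"
    using window_step[OF r, of "i - 1"] by simp
  then show ?case using dualL_injective[OF window_cvec] step2 by simp
qed

lemma window_independent:
  assumes ru: "\<And>n. dual_eq u n" and rw: "\<And>n. dual_eq w n"
    and indep: "\<And>x y. (\<forall>n. x * u n + y * w n = 0) \<Longrightarrow> x = 0 \<and> y = 0"
    and z: "(\<lambda>i. x * window u 0 i + y * window w 0 i) = (\<lambda>i. 0)"
  shows "x = 0 \<and> y = 0"
proof -
  define z where "z = (\<lambda>t. x * u t + y * w t)"
  have rz: "\<And>n. dual_eq z n" unfolding z_def using ru rw by (rule dual_eq_lincomb)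
  have "window z 0 = (\<lambda>i. 0)" unfolding z_def window_lincomb by (rule z)
  then have all: "\<And>n. window z n = (\<lambda>i. 0)" using window_zero_everywhere[OF rz] by blast
  have "z t = 0" for t
  proof -
    have "window z (t - int d + 1) 0 = z t" using d_ge_1 by (simp add: window_def)
    then show ?thesis using all by simp
  qed
  then show ?thesis using indep unfolding z_def by blast
qed

lemma window_decaying:
  assumes du: "decaying u"
  shows "decaying (\<lambda>n. vnorm (2*d) (window u n))"
  unfolding decaying_def
proof (intro allI impI)
  fix \<epsilon> :: real assume ep: "\<epsilon> > 0"
  define \<eta> where "\<eta> = \<epsilon> / real (2*d)"
  have eta: "\<eta> > 0" using ep d_ge_1 by (simp add: \<eta>_def)
  obtain M0 where M0: "\<And>n. \<bar>n\<bar> \<ge> M0 \<Longrightarrow> cmod (u n) < \<eta>" using du eta unfolding decaying_def by blast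
  have "vnorm (2*d) (window u n) < \<epsilon>" if n: "\<bar>n\<bar> \<ge> M0 + 2 * int d" for n
  proof -
    have "vnorm (2*d) (window u n) \<le> (\<Sum>i<2*d. cmod (window u n i))" by (rule vnorm_le_sum)
    also have "\<dots> < (\<Sum>i<2*d. \<eta>)"
    proof (rule sum_strict_mono)
      show "{..<2*d} \<noteq> {}" using d_ge_1 by (simp add: lessThan_empty_iff)
      fix i assume i: "i \<in> {..<2*d}"
      have "\<bar>n + int d - 1 - int i\<bar> \<ge> M0" using n i by auto
      then show "cmod (window u n i) < \<eta>" using i M0 by (simp add: window_def)
    qed simp
    also have "\<dots> = \<epsilon>" using d_ge_1 by (simp add: \<eta>_def)
    finally show ?thesis .
  qed
  then show "\<exists>M. \<forall>n. \<bar>n\<bar> \<ge> M \<longrightarrow> norm (vnorm (2*d) (window u n)) < \<epsilon>" by auto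
qed

end

lemma ratio_le_trans:
  fixes a b c e f g :: real
  assumes "a * b \<le> c * e" and "e * f \<le> b * g" and "b = 0 \<Longrightarrow> f = 0"
    and "a \<ge> 0" "b \<ge> 0" "c \<ge> 0" "f \<ge> 0" "g \<ge> 0"
  shows "a * f \<le> c * g"
proof (cases "b = 0")
  case False
  have "b * (a * f) = (a * b) * f" by simp
  also have "\<dots> \<le> (c * e) * f" using assms by (intro mult_right_mono) auto
  also have "\<dots> = c * (e * f)" by simp
  also have "\<dots> \<le> c * (b * g)" using assms by (intro mult_left_mono) auto
  also have "\<dots> = b * (c * g)" by simp
  finally have "b * (a * f) \<le> b * (c * g)" .
  then show ?thesis using False assms(5) by (simp add: mult_le_cancel_left_pos)
qed (use assms in simp)

locale dominated_split = dual_cocycle +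
  fixes Ep Em :: "real \<Rightarrow> (nat \<Rightarrow> complex) set" and P :: "real \<Rightarrow> nat \<Rightarrow> nat \<Rightarrow> complex" and N :: nat
  assumes Ep_Em_periodic: "\<And>\<theta>. Ep (\<theta> + 1) = Ep \<theta> \<and> Em (\<theta> + 1) = Em \<theta>"
    and Ep_dim: "\<And>\<theta>. subspace_dim (2*d) (Ep \<theta>) (d - 1)"
    and Em_dim: "\<And>\<theta>. subspace_dim (2*d) (Em \<theta>) (d + 1)"
    and direct_sum: "\<And>\<theta>. \<forall>u\<in>cvec (2*d). \<exists>!p. fst p \<in> Ep \<theta> \<and> snd p \<in> Em \<theta> \<and> u = (\<lambda>i. fst p i + snd p i)"
    and P_continuous: "\<And>i j. i < 2*d \<Longrightarrow> j < 2*d \<Longrightarrow> continuous_on UNIV (\<lambda>\<theta>. P \<theta> i j)"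
    and P_projection: "\<And>\<theta> u. u \<in> cvec (2*d) \<Longrightarrow> mvmult (2*d) (P \<theta>) u \<in> Ep \<theta> \<and>
                            (\<lambda>i. u i - mvmult (2*d) (P \<theta>) u i) \<in> Em \<theta>"
    and Ep_Em_invariant: "\<And>\<theta>. mvmult (2*d) (L \<theta>) ` Ep \<theta> = Ep (\<theta> + \<alpha>) \<and> mvmult (2*d) (L \<theta>) ` Em \<theta> = Em (\<theta> + \<alpha>)"
    and N_ge_1: "N \<ge> 1"
    and domination: "\<And>\<theta> u w. u \<in> Ep \<theta> \<Longrightarrow> w \<in> Em \<theta> \<Longrightarrow> vnorm (2*d) u = 1 \<Longrightarrow> vnorm (2*d) w = 1 \<Longrightarrow>
          vnorm (2*d) (cocycle_iter (2*d) \<alpha> L N \<theta> u) > vnorm (2*d) (cocycle_iter (2*d) \<alpha> L N \<theta> w)"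

lemma dominated_split_of_dominated:
  assumes "dual_cocycle d vh" and "dominated (2*d) \<alpha> (dualL d vh E) (d - 1)"
  obtains Ep Em P N where "dominated_split d vh E \<alpha> Ep Em P N"
proof -
  have dd: "2*d - (d - 1) = d + 1" using dual_cocycle.d_ge_1[OF assms(1)] by simp
  from assms(2) show ?thesis
    unfolding dominated_def dd
    by (elim exE conjE)
      (rule that, unfold dominated_split_def dominated_split_axioms_def, intro conjI, auto simp: assms(1))
qed

context dominated_split
begin

lemma Ep_cvec: "x \<in> Ep \<theta> \<Longrightarrow> x \<in> cvec (2*d)"
  using subspace_dim_cvec[OF Ep_dim] .

lemma Em_cvec: "x \<in> Em \<theta> \<Longrightarrow> x \<in> cvec (2*d)"
  using subspace_dim_cvec[OF Em_dim] .

lemma split_unique: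
  assumes "x \<in> Ep \<theta>" "y \<in> Em \<theta>" "x' \<in> Ep \<theta>" "y' \<in> Em \<theta>"
    and "(\<lambda>i. x i + y i) = (\<lambda>i. x' i + y' i)"
  shows "x = x' \<and> y = y'"
proof -
  have u: "(\<lambda>i. x i + y i) \<in> cvec (2*d)"
    using Ep_cvec[OF assms(1)] Em_cvec[OF assms(2)] by (auto simp: cvec_def)
  have ex1: "\<exists>!p. fst p \<in> Ep \<theta> \<and> snd p \<in> Em \<theta> \<and> (\<lambda>i. x i + y i) = (\<lambda>i. fst p i + snd p i)"
    using direct_sum[of \<theta>] u by (rule bspec)
  show ?thesis
  proof (rule ex1E[OF ex1])
    fix p assume "fst p \<in> Ep \<theta> \<and> snd p \<in> Em \<theta> \<and> (\<lambda>i. x i + y i) = (\<lambda>i. fst p i + snd p i)"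
      and all: "\<forall>q. fst q \<in> Ep \<theta> \<and> snd q \<in> Em \<theta> \<and> (\<lambda>i. x i + y i) = (\<lambda>i. fst q i + snd q i) \<longrightarrow> q = p"
    have "(x, y) = p" using all assms(1,2) by simp
    moreover have "(x', y') = p" using all assms(3,4,5) by simp
    ultimately have "(x, y) = (x', y')" by simp
    then show ?thesis by simp
  qed
qed

lemma split_zero:
  assumes "x \<in> Ep \<theta>" "y \<in> Em \<theta>" "(\<lambda>i. x i + y i) = (\<lambda>i. 0)"
  shows "x = (\<lambda>i. 0) \<and> y = (\<lambda>i. 0)"
  using split_unique[OF assms(1,2) subspace_dim_zero[OF Ep_dim] subspace_dim_zero[OF Em_dim]] assms(3) by simp

lemma P_sum: "x \<in> Ep \<theta> \<Longrightarrow> y \<in> Em \<theta> \<Longrightarrow> mvmult (2*d) (P \<theta>) (\<lambda>i. x i + y i) = x"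
proof -
  assume x: "x \<in> Ep \<theta>" and y: "y \<in> Em \<theta>"
  let ?u = "\<lambda>i. x i + y i"
  have u: "?u \<in> cvec (2*d)" using Ep_cvec[OF x] Em_cvec[OF y] by (auto simp: cvec_def)
  define a where "a = mvmult (2*d) (P \<theta>) ?u"
  define b where "b = (\<lambda>i. ?u i - mvmult (2*d) (P \<theta>) ?u i)"
  have ab: "a \<in> Ep \<theta>" "b \<in> Em \<theta>" using P_projection[OF u] by (auto simp: a_def b_def)
  have "(\<lambda>i. a i + b i) = (\<lambda>i. x i + y i)" by (simp add: a_def b_def)
  from split_unique[OF ab x y this] show ?thesis by (simp add: a_def)
qed

lemma cocycle_iter_Ep: "x \<in> Ep \<theta> \<Longrightarrow> cocycle_iter (2*d) \<alpha> L n \<theta> x \<in> Ep (\<theta> + real n * \<alpha>)"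
proof (induction n)
  case 0 then show ?case by simp
next
  case (Suc n)
  have e: "\<theta> + real (Suc n) * \<alpha> = (\<theta> + real n * \<alpha>) + \<alpha>" by (simp add: algebra_simps)
  show ?case unfolding e using Ep_Em_invariant[of "\<theta> + real n * \<alpha>"] Suc by auto
qed

lemma cocycle_iter_Em: "x \<in> Em \<theta> \<Longrightarrow> cocycle_iter (2*d) \<alpha> L n \<theta> x \<in> Em (\<theta> + real n * \<alpha>)"
proof (induction n)
  case 0 then show ?case by simp
next
  case (Suc n)
  have e: "\<theta> + real (Suc n) * \<alpha> = (\<theta> + real n * \<alpha>) + \<alpha>" by (simp add: algebra_simps)
  show ?case unfolding e using Ep_Em_invariant[of "\<theta> + real n * \<alpha>"] Suc by auto
qed

lemma cocycle_iter_Ep_surj: "z \<in> Ep (\<theta> + real n * \<alpha>) \<Longrightarrow> \<exists>x\<in>Ep \<theta>. cocycle_iter (2*d) \<alpha> L n \<theta> x = z"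
proof (induction n arbitrary: z)
  case 0 then show ?case by auto
next
  case (Suc n)
  have e: "\<theta> + real (Suc n) * \<alpha> = (\<theta> + real n * \<alpha>) + \<alpha>" by (simp add: algebra_simps)
  from Suc.prems obtain y where "y \<in> Ep (\<theta> + real n * \<alpha>)" "z = mvmult (2*d) (L (\<theta> + real n * \<alpha>)) y"
    unfolding e using Ep_Em_invariant[of "\<theta> + real n * \<alpha>"] by (metis image_iff)
  then show ?case using Suc.IH by fastforce
qed

lemma P_dualL_commute: "u \<in> cvec (2*d) \<Longrightarrow>
   mvmult (2*d) (P (\<theta> + \<alpha>)) (mvmult (2*d) (L \<theta>) u) = mvmult (2*d) (L \<theta>) (mvmult (2*d) (P \<theta>) u)"
proof -
  assume u: "u \<in> cvec (2*d)"
  define x where "x = mvmult (2*d) (P \<theta>) u"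
  define y where "y = (\<lambda>i. u i - mvmult (2*d) (P \<theta>) u i)"
  have xy: "x \<in> Ep \<theta>" "y \<in> Em \<theta>" using P_projection[OF u] by (auto simp: x_def y_def)
  have "u = (\<lambda>i. x i + y i)" by (simp add: x_def y_def)
  then have "mvmult (2*d) (L \<theta>) u = (\<lambda>i. mvmult (2*d) (L \<theta>) x i + mvmult (2*d) (L \<theta>) y i)"
    by (metis mvmult_add)
  moreover have "mvmult (2*d) (L \<theta>) x \<in> Ep (\<theta> + \<alpha>)" "mvmult (2*d) (L \<theta>) y \<in> Em (\<theta> + \<alpha>)"
    using Ep_Em_invariant[of \<theta>] xy by auto
  ultimately show ?thesis using P_sum by (simp add: x_def)
qed

lemma P_cocycle_iter_commute: "u \<in> cvec (2*d) \<Longrightarrow>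
   mvmult (2*d) (P (\<theta> + real n * \<alpha>)) (cocycle_iter (2*d) \<alpha> L n \<theta> u) = cocycle_iter (2*d) \<alpha> L n \<theta> (mvmult (2*d) (P \<theta>) u)"
proof (induction n)
  case 0
  have "mvmult (2*d) (P \<theta>) u \<in> cvec (2*d)" by simp
  then show ?case by simp
next
  case (Suc n)
  have e: "\<theta> + real (Suc n) * \<alpha> = (\<theta> + real n * \<alpha>) + \<alpha>" by (simp add: algebra_simps)
  show ?case unfolding e cocycle_iter.simps
    using P_dualL_commute[where u="cocycle_iter (2*d) \<alpha> L n \<theta> u" and \<theta>="\<theta> + real n * \<alpha>"] cocycle_iter_cvec[OF Suc.prems] Suc by simp
qed

lemma P_periodic_vec: "u \<in> cvec (2*d) \<Longrightarrow> mvmult (2*d) (P (\<theta> + 1)) u = mvmult (2*d) (P \<theta>) u"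
proof -
  assume u: "u \<in> cvec (2*d)"
  define x where "x = mvmult (2*d) (P \<theta>) u"
  define y where "y = (\<lambda>i. u i - mvmult (2*d) (P \<theta>) u i)"
  have xy: "x \<in> Ep (\<theta>+1)" "y \<in> Em (\<theta>+1)" using P_projection[OF u] Ep_Em_periodic[of \<theta>] by (auto simp: x_def y_def)
  have "u = (\<lambda>i. x i + y i)" by (simp add: x_def y_def)
  then show ?thesis using P_sum[OF xy] by (simp add: x_def)
qed

lemma P_periodic: "i < 2*d \<Longrightarrow> j < 2*d \<Longrightarrow> P (\<theta> + 1) i j = P \<theta> i j"
proof -
  assume ij: "i < 2*d" "j < 2*d"
  have "(\<lambda>t. if t = j then 1 else 0 :: complex) \<in> cvec (2*d)" using ij by (auto simp: cvec_def)
  from P_periodic_vec[OF this, of \<theta>] have "mvmult (2*d) (P (\<theta> + 1)) (\<lambda>t. if t = j then 1 else 0) i = mvmult (2*d) (P \<theta>) (\<lambda>t. if t = j then 1 else 0) i"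
    by simp
  then show ?thesis using mvmult_unit[OF ij] by metis
qed

lemma P_norm_bound: "\<exists>Mb\<ge>0. \<forall>\<theta> u. vnorm (2*d) (mvmult (2*d) (P \<theta>) u) \<le> Mb * vnorm (2*d) u"
proof -
  have "\<exists>b. \<forall>\<theta>. cmod (P \<theta> i j) \<le> b" if "i < 2*d" "j < 2*d" for i j
    using continuous_periodic_bounded[OF P_continuous[OF that] P_periodic[OF that]] by simp
  then obtain b where b: "\<And>\<theta> i j. i < 2*d \<Longrightarrow> j < 2*d \<Longrightarrow> cmod (P \<theta> i j) \<le> b i j" by metis
  define B where "B = (\<Sum>i<2*d. \<Sum>j<2*d. \<bar>b i j\<bar>)"
  have "cmod (P \<theta> i j) \<le> B" if ij: "i < 2*d" "j < 2*d" for \<theta> i j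
  proof -
    have "cmod (P \<theta> i j) \<le> \<bar>b i j\<bar>" using b[OF ij] abs_ge_self order_trans by blast
    also have "\<bar>b i j\<bar> \<le> (\<Sum>j<2*d. \<bar>b i j\<bar>)" using ij by (intro member_le_sum) auto
    also have "\<dots> \<le> B"
      unfolding B_def using ij by (intro member_le_sum[where f="\<lambda>i. \<Sum>j<2*d. \<bar>b i j\<bar>"] sum_nonneg) auto
    finally show ?thesis .
  qed
  moreover have B0: "B \<ge> 0" unfolding B_def by (intro sum_nonneg) auto
  ultimately have "vnorm (2*d) (mvmult (2*d) (P \<theta>) u) \<le> (real (2*d) * real (2*d) * B) * vnorm (2*d) u" for \<theta> u
    by (intro mvmult_vnorm_le)
  then show ?thesis using B0 by (intro exI[of _ "real (2*d) * real (2*d) * B"]) auto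
qed

lemma domination_ratio:
  assumes u: "u \<in> Ep \<theta>" and w: "w \<in> Em \<theta>"
  shows "vnorm (2*d) (cocycle_iter (2*d) \<alpha> L N \<theta> w) * vnorm (2*d) u
       \<le> vnorm (2*d) (cocycle_iter (2*d) \<alpha> L N \<theta> u) * vnorm (2*d) w"
proof (cases "vnorm (2*d) u = 0 \<or> vnorm (2*d) w = 0")
  case True
  then show ?thesis
  proof
    assume "vnorm (2*d) u = 0" then show ?thesis by simp
  next
    assume "vnorm (2*d) w = 0"
    then have "w = (\<lambda>i. 0)" using vnorm_eq_0_iff[OF Em_cvec[OF w]] by simp
    then show ?thesis by (simp add: vnorm_def)
  qed
next
  case False
  then have pu: "vnorm (2*d) u > 0" and pw: "vnorm (2*d) w > 0"
    using vnorm_nonneg[of "2*d"] by (auto simp: less_le)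
  define u' where "u' = (\<lambda>i. complex_of_real (1 / vnorm (2*d) u) * u i)"
  define w' where "w' = (\<lambda>i. complex_of_real (1 / vnorm (2*d) w) * w i)"
  have "u' \<in> Ep \<theta>" unfolding u'_def by (rule subspace_dim_scale[OF Ep_dim u])
  moreover have "w' \<in> Em \<theta>" unfolding w'_def by (rule subspace_dim_scale[OF Em_dim w])
  moreover have "vnorm (2*d) u' = 1" unfolding u'_def vnorm_scale using pu by (simp add: norm_divide)
  moreover have "vnorm (2*d) w' = 1" unfolding w'_def vnorm_scale using pw by (simp add: norm_divide)
  ultimately have "vnorm (2*d) (cocycle_iter (2*d) \<alpha> L N \<theta> w') < vnorm (2*d) (cocycle_iter (2*d) \<alpha> L N \<theta> u')"
    by (rule domination)
  then have "vnorm (2*d) (cocycle_iter (2*d) \<alpha> L N \<theta> w) / vnorm (2*d) w < vnorm (2*d) (cocycle_iter (2*d) \<alpha> L N \<theta> u) / vnorm (2*d) u"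
    unfolding u'_def w'_def cocycle_iter_scale vnorm_scale using pu pw by (simp add: norm_divide)
  then show ?thesis using pu pw by (simp add: field_simps)
qed

lemma domination_ratio_multiple:
  "u \<in> Ep \<theta> \<Longrightarrow> w \<in> Em \<theta> \<Longrightarrow>
     vnorm (2*d) (cocycle_iter (2*d) \<alpha> L (k*N) \<theta> w) * vnorm (2*d) u
       \<le> vnorm (2*d) (cocycle_iter (2*d) \<alpha> L (k*N) \<theta> u) * vnorm (2*d) w"
proof (induction k arbitrary: \<theta> u w)
  case 0
  then show ?case by (simp add: mult.commute)
next
  case (Suc k)
  let ?\<theta>' = "\<theta> + real N * \<alpha>"
  define u' where "u' = cocycle_iter (2*d) \<alpha> L N \<theta> u"
  define w' where "w' = cocycle_iter (2*d) \<alpha> L N \<theta> w"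
  have u': "u' \<in> Ep ?\<theta>'" unfolding u'_def by (rule cocycle_iter_Ep[OF Suc.prems(1)])
  have w': "w' \<in> Em ?\<theta>'" unfolding w'_def by (rule cocycle_iter_Em[OF Suc.prems(2)])
  have split: "cocycle_iter (2*d) \<alpha> L (Suc k * N) \<theta> x = cocycle_iter (2*d) \<alpha> L (k*N) ?\<theta>' (cocycle_iter (2*d) \<alpha> L N \<theta> x)" for x
    using cocycle_iter_add_steps[of "2*d" \<alpha> L N "k*N" \<theta> x] by (simp add: add.commute)
  have "vnorm (2*d) u = 0" if "vnorm (2*d) u' = 0"
  proof -
    have "cocycle_iter (2*d) \<alpha> L N \<theta> u = (\<lambda>i. 0)"
      using that vnorm_eq_0_iff[OF Ep_cvec[OF u']] by (simp add: u'_def)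
    then have "u = (\<lambda>i. 0)" using cocycle_iter_dualL_injective[OF Ep_cvec[OF Suc.prems(1)]] by blast
    then show ?thesis by (simp add: vnorm_def)
  qed
  then show ?case
    unfolding split u'_def[symmetric] w'_def[symmetric]
    by (rule ratio_le_trans[OF Suc.IH[OF u' w'] domination_ratio[OF Suc.prems, folded u'_def w'_def]]) simp_all
qed

lemma Em_of_cocycle_iter_Em:
  assumes x: "x \<in> cvec (2*d)" and it: "cocycle_iter (2*d) \<alpha> L n \<theta> x \<in> Em (\<theta> + real n * \<alpha>)"
  shows "x \<in> Em \<theta>"
proof -
  define p where "p = mvmult (2*d) (P \<theta>) x"
  define r where "r = (\<lambda>i. x i - mvmult (2*d) (P \<theta>) x i)"
  have pr: "p \<in> Ep \<theta>" "r \<in> Em \<theta>" using P_projection[OF x] by (auto simp: p_def r_def)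
  have xpr: "x = (\<lambda>i. p i + r i)" by (simp add: p_def r_def)
  have "(\<lambda>i. cocycle_iter (2*d) \<alpha> L n \<theta> p i + cocycle_iter (2*d) \<alpha> L n \<theta> r i)
      = (\<lambda>i. (\<lambda>i. 0) i + cocycle_iter (2*d) \<alpha> L n \<theta> x i)"
    unfolding xpr cocycle_iter_add by simp
  from split_unique[OF cocycle_iter_Ep[OF pr(1)] cocycle_iter_Em[OF pr(2)] subspace_dim_zero[OF Ep_dim] it this]
  have "cocycle_iter (2*d) \<alpha> L n \<theta> p = (\<lambda>i. 0)" by simp
  then have "p = (\<lambda>i. 0)" using cocycle_iter_dualL_injective[OF Ep_cvec[OF pr(1)]] by blast
  then have "x = r" using xpr by simp
  then show ?thesis using pr(2) by simp
qed

end

context dual_cocycle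
begin

lemma isotropic_independent_card_le:
  assumes fin: "finite I" and X: "\<forall>i\<in>I. X i \<in> cvec (2*d)"
    and indep: "\<And>c. (\<lambda>t. \<Sum>i\<in>I. c i * X i t) = (\<lambda>t. 0) \<Longrightarrow> \<forall>i\<in>I. c i = 0"
    and iso: "\<And>c. hform (\<lambda>t. \<Sum>i\<in>I. c i * X i t) (\<lambda>t. \<Sum>i\<in>I. c i * X i t) = 0"
  shows "card I \<le> d"
proof (rule ccontr)
  assume "\<not> card I \<le> d"
  then obtain c where "\<exists>i\<in>I. c i \<noteq> 0" "(\<lambda>t. \<Sum>i\<in>I. c i * X i t) = (\<lambda>t. 0)"
    using isotropic_family_dependent[OF fin _ X iso] by auto
  then show False using indep by blast
qed

lemma subspace_dim_isotropic_le:
  assumes V: "subspace_dim (2*d) V k" and iso: "\<And>Z. Z \<in> V \<Longrightarrow> hform Z Z = 0"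
  shows "k \<le> d"
proof -
  obtain b where b: "\<forall>j<k. b j \<in> V" "\<forall>c. lincomb k b c = (\<lambda>i. 0) \<longrightarrow> (\<forall>j<k. c j = 0)"
    "V = {lincomb k b c | c. True}"
    using V unfolding subspace_dim_def by blast
  have "card {..<k} \<le> d"
  proof (rule isotropic_independent_card_le)
    show "\<forall>i\<in>{..<k}. b i \<in> cvec (2*d)" using b(1) subspace_dim_cvec[OF V] by blast
    show "\<forall>i\<in>{..<k}. c i = 0" if "(\<lambda>t. \<Sum>i\<in>{..<k}. c i * b i t) = (\<lambda>t. 0)" for c
      using b(2) that by (simp add: lincomb_def)
    show "hform (\<lambda>t. \<Sum>i\<in>{..<k}. c i * b i t) (\<lambda>t. \<Sum>i\<in>{..<k}. c i * b i t) = 0" for c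
      using iso[of "lincomb k b c"] b(3) by (auto simp: lincomb_def)
  qed simp
  then show ?thesis by simp
qed

end

context dominated_split
begin

text \<open>Forward iteration: a vector of \<open>E\<^sup>-\<close> shrinks at least as fast as any vector of \<open>E\<^sup>+\<close>.\<close>
lemma hform_Em_eq_0_if_Ep_orbit_small:
  assumes Y: "Y \<in> Ep 0" "Y \<noteq> (\<lambda>i. 0)"
    and small: "\<And>\<eta>. \<eta> > 0 \<Longrightarrow> \<exists>k. vnorm (2*d) (cocycle_iter (2*d) \<alpha> L (k*N) 0 Y) < \<eta>"
    and Z: "Z \<in> Em 0"
  shows "hform Z Z = 0"
proof (rule hform_eq_0_if_small)
  fix \<epsilon> :: real assume ep: "\<epsilon> > 0"
  have vY: "vnorm (2*d) Y > 0" using vnorm_pos[OF Ep_cvec[OF Y(1)] Y(2)] .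
  define \<eta> where "\<eta> = \<epsilon> * vnorm (2*d) Y / (vnorm (2*d) Z + 1)"
  have "\<eta> > 0" using ep vY by (simp add: \<eta>_def add_nonneg_pos)
  then obtain k where k: "vnorm (2*d) (cocycle_iter (2*d) \<alpha> L (k*N) 0 Y) < \<eta>" using small by blast
  define V where "V = cocycle_iter (2*d) \<alpha> L (k*N) 0 Z"
  have "vnorm (2*d) V * vnorm (2*d) Y \<le> vnorm (2*d) (cocycle_iter (2*d) \<alpha> L (k*N) 0 Y) * vnorm (2*d) Z"
    unfolding V_def by (rule domination_ratio_multiple[OF Y(1) Z])
  also have "\<dots> \<le> \<eta> * vnorm (2*d) Z" using k by (intro mult_right_mono) auto
  also have "\<dots> = \<epsilon> * vnorm (2*d) Y * (vnorm (2*d) Z / (vnorm (2*d) Z + 1))"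
    by (simp add: \<eta>_def)
  also have "\<dots> < \<epsilon> * vnorm (2*d) Y * 1"
    using ep vY by (intro mult_strict_left_mono) (simp_all add: add_nonneg_pos)
  also have "\<dots> = \<epsilon> * vnorm (2*d) Y" by simp
  finally have "vnorm (2*d) V < \<epsilon>" using vY by simp
  moreover have "hform Z Z = hform V V" by (simp add: V_def hform_cocycle_iter)
  ultimately show "\<exists>V. hform Z Z = hform V V \<and> vnorm (2*d) V < \<epsilon>" by blast
qed

lemma window_in_Em_if_decaying:
  assumes rs: "\<And>n. dual_eq s n" and ds: "decaying s"
  shows "window s 0 \<in> Em 0"
proof (rule ccontr)
  assume notin: "window s 0 \<notin> Em 0"
  define Y where "Y = mvmult (2*d) (P 0) (window s 0)"
  have Y: "Y \<in> Ep 0" using P_projection[OF window_cvec] by (simp add: Y_def)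
  have "(\<lambda>i. window s 0 i - Y i) \<in> Em 0" using P_projection[OF window_cvec] by (simp add: Y_def)
  then have Y0: "Y \<noteq> (\<lambda>i. 0)" using notin by auto
  obtain Mb where Mb: "Mb \<ge> 0" "\<And>\<theta> u. vnorm (2*d) (mvmult (2*d) (P \<theta>) u) \<le> Mb * vnorm (2*d) u"
    using P_norm_bound by blast
  have iterY: "cocycle_iter (2*d) \<alpha> L n 0 Y = mvmult (2*d) (P (real n * \<alpha>)) (window s (int n))" for n
    using P_cocycle_iter_commute[OF window_cvec, of 0 n s 0] cocycle_iter_window[OF rs, of n 0]
    by (simp add: Y_def)
  have small: "\<exists>k. vnorm (2*d) (cocycle_iter (2*d) \<alpha> L (k*N) 0 Y) < \<eta>" if "\<eta> > 0" for \<eta>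
  proof -
    have "\<eta> / (Mb + 1) > 0" using that Mb(1) by simp
    then obtain k0 where "\<forall>k\<ge>k0. norm (vnorm (2*d) (window s (int (k*N)))) < \<eta> / (Mb + 1)
        \<and> norm (vnorm (2*d) (window s (- int (k*N)))) < \<eta> / (Mb + 1)"
      using decaying_along_multiples[OF window_decaying[OF ds] _ N_ge_1] by blast
    then have k0: "vnorm (2*d) (window s (int (k0*N))) < \<eta> / (Mb + 1)" by simp
    have "vnorm (2*d) (cocycle_iter (2*d) \<alpha> L (k0*N) 0 Y) \<le> Mb * vnorm (2*d) (window s (int (k0*N)))"
      unfolding iterY by (rule Mb(2))
    also have "\<dots> \<le> (Mb + 1) * vnorm (2*d) (window s (int (k0*N)))" by (simp add: algebra_simps)
    also have "\<dots> < \<eta>" using k0 Mb(1) by (simp add: field_simps)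
    finally show ?thesis by blast
  qed
  have "hform Z Z = 0" if "Z \<in> Em 0" for Z
    using hform_Em_eq_0_if_Ep_orbit_small[OF Y Y0 small that] by blast
  then have "d + 1 \<le> d" using subspace_dim_isotropic_le[OF Em_dim] by blast
  then show False by simp
qed

text \<open>Backward iteration: preimages of a vector of \<open>E\<^sup>+\<close> shrink at least as fast as those of any
  vector of \<open>E\<^sup>-\<close>.\<close>
lemma hform_eq_0_if_backward_small:
  assumes z: "z \<in> Ep 0" and U: "U \<in> cvec (2*d)" "U \<noteq> (\<lambda>i. 0)"
    and small: "\<And>\<eta>. \<eta> > 0 \<Longrightarrow> \<exists>k a b. a \<in> Em (- real (k*N) * \<alpha>) \<and>
        cocycle_iter (2*d) \<alpha> L (k*N) (- real (k*N) * \<alpha>) a = U \<and>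
        cocycle_iter (2*d) \<alpha> L (k*N) (- real (k*N) * \<alpha>) b = W \<and>
        vnorm (2*d) a < \<eta> \<and> vnorm (2*d) b < \<eta>"
  shows "hform (\<lambda>i. z i + W i) (\<lambda>i. z i + W i) = 0"
proof (rule hform_eq_0_if_small)
  fix \<epsilon> :: real assume ep: "\<epsilon> > 0"
  have vU: "vnorm (2*d) U > 0" using vnorm_pos[OF U] .
  define K where "K = vnorm (2*d) z / vnorm (2*d) U + 1"
  have K: "K > 0" using vU by (simp add: K_def add_nonneg_pos)
  obtain k a b where a: "a \<in> Em (- real (k*N) * \<alpha>)" "cocycle_iter (2*d) \<alpha> L (k*N) (- real (k*N) * \<alpha>) a = U"
    and b: "cocycle_iter (2*d) \<alpha> L (k*N) (- real (k*N) * \<alpha>) b = W"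
    and small_ab: "vnorm (2*d) a < \<epsilon> / K" "vnorm (2*d) b < \<epsilon> / K"
    using small[of "\<epsilon> / K"] ep K by auto
  let ?\<theta> = "- real (k*N) * \<alpha>"
  have "z \<in> Ep (?\<theta> + real (k*N) * \<alpha>)" using z by simp
  then obtain zk where zk: "zk \<in> Ep ?\<theta>" "cocycle_iter (2*d) \<alpha> L (k*N) ?\<theta> zk = z"
    using cocycle_iter_Ep_surj by blast
  define V where "V = (\<lambda>i. zk i + b i)"
  have "vnorm (2*d) U * vnorm (2*d) zk \<le> vnorm (2*d) z * vnorm (2*d) a"
    using domination_ratio_multiple[OF zk(1) a(1), of k] unfolding a(2) zk(2) .
  then have "vnorm (2*d) zk \<le> (vnorm (2*d) z / vnorm (2*d) U) * vnorm (2*d) a"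
    using vU by (simp add: field_simps)
  also have "\<dots> \<le> (vnorm (2*d) z / vnorm (2*d) U) * (\<epsilon> / K)"
    using small_ab(1) vU by (intro mult_left_mono) auto
  finally have "vnorm (2*d) V < (vnorm (2*d) z / vnorm (2*d) U) * (\<epsilon> / K) + \<epsilon> / K"
    using vnorm_triangle_ineq[of "2*d" zk b] small_ab(2) unfolding V_def by linarith
  also have "\<dots> = K * (\<epsilon> / K)" by (simp only: K_def distrib_right mult_1_left)
  also have "\<dots> = \<epsilon>" using K by simp
  finally have "vnorm (2*d) V < \<epsilon>" .
  moreover have "cocycle_iter (2*d) \<alpha> L (k*N) ?\<theta> V = (\<lambda>i. z i + W i)"
    unfolding V_def cocycle_iter_add zk(2) b ..
  then have "hform (\<lambda>i. z i + W i) (\<lambda>i. z i + W i) = hform V V"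
    using hform_cocycle_iter[of "k*N" ?\<theta> V V] by simp
  ultimately show "\<exists>V. hform (\<lambda>i. z i + W i) (\<lambda>i. z i + W i) = hform V V \<and> vnorm (2*d) V < \<epsilon>"
    by blast
qed

end

context dominated_split
begin

lemma windows_backward_small:
  assumes "decaying u" and "decaying w" and "\<eta> > 0"
  shows "\<exists>k. vnorm (2*d) (window u (- int (k*N))) < \<eta> \<and> vnorm (2*d) (window w (- int (k*N))) < \<eta>"
proof -
  obtain ka kb where
    "\<forall>k\<ge>ka. norm (vnorm (2*d) (window u (int (k*N)))) < \<eta> \<and> norm (vnorm (2*d) (window u (- int (k*N)))) < \<eta>"
    "\<forall>k\<ge>kb. norm (vnorm (2*d) (window w (int (k*N)))) < \<eta> \<and> norm (vnorm (2*d) (window w (- int (k*N)))) < \<eta>"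
    using decaying_along_multiples[OF window_decaying[OF assms(1)] assms(3) N_ge_1]
      decaying_along_multiples[OF window_decaying[OF assms(2)] assms(3) N_ge_1] by blast
  then show ?thesis by (intro exI[of _ "max ka kb"]) simp
qed

lemma hform_Ep_plus_windows_eq_0:
  assumes ru: "\<And>n. dual_eq u n" and rw: "\<And>n. dual_eq w n"
    and du: "decaying u" and dw: "decaying w"
    and Ua: "window u 0 \<in> Em 0" "window u 0 \<noteq> (\<lambda>i. 0)" and z: "z \<in> Ep 0"
  shows "hform (\<lambda>i. z i + (c1 * window u 0 i + c2 * window w 0 i))
                (\<lambda>i. z i + (c1 * window u 0 i + c2 * window w 0 i)) = 0"
proof (rule hform_eq_0_if_backward_small[OF z window_cvec Ua(2)])
  fix \<eta> :: real assume eta: "\<eta> > 0"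
  define \<eta>' where "\<eta>' = \<eta> / (cmod c1 + cmod c2 + 1)"
  have "\<eta>' > 0" using eta by (simp add: \<eta>'_def add_nonneg_pos)
  then obtain k where small: "vnorm (2*d) (window u (- int (k*N))) < \<eta>'" "vnorm (2*d) (window w (- int (k*N))) < \<eta>'"
    using windows_backward_small[OF du dw] by blast
  let ?\<theta> = "- real (k*N) * \<alpha>"
  define a where "a = window u (- int (k*N))"
  define a' where "a' = window w (- int (k*N))"
  define b where "b = (\<lambda>i. c1 * a i + c2 * a' i)"
  have ia: "cocycle_iter (2*d) \<alpha> L (k*N) ?\<theta> a = window u 0"
    using cocycle_iter_window[OF ru, of "k*N" "- int (k*N)"] by (simp add: a_def)
  have ia': "cocycle_iter (2*d) \<alpha> L (k*N) ?\<theta> a' = window w 0"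
    using cocycle_iter_window[OF rw, of "k*N" "- int (k*N)"] by (simp add: a'_def)
  have "cocycle_iter (2*d) \<alpha> L (k*N) ?\<theta> a \<in> Em (?\<theta> + real (k*N) * \<alpha>)" using ia Ua(1) by simp
  then have "a \<in> Em ?\<theta>" by (rule Em_of_cocycle_iter_Em[rotated]) (simp add: a_def)
  moreover have "cocycle_iter (2*d) \<alpha> L (k*N) ?\<theta> b = (\<lambda>i. c1 * window u 0 i + c2 * window w 0 i)"
    unfolding b_def cocycle_iter_add cocycle_iter_scale ia ia' ..
  moreover have "vnorm (2*d) a < \<eta>" "vnorm (2*d) b < \<eta>"
  proof -
    have va: "vnorm (2*d) a < \<eta>'" "vnorm (2*d) a' < \<eta>'" using small by (auto simp: a_def a'_def)
    have "vnorm (2*d) b \<le> cmod c1 * vnorm (2*d) a + cmod c2 * vnorm (2*d) a'"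
      unfolding b_def using vnorm_triangle_ineq[of "2*d" "\<lambda>i. c1 * a i" "\<lambda>i. c2 * a' i"] by (simp add: vnorm_scale)
    also have "\<dots> \<le> (cmod c1 + cmod c2) * \<eta>'"
      using va by (simp add: distrib_right add_mono mult_left_mono less_imp_le)
    also have "\<dots> = \<eta> * ((cmod c1 + cmod c2) / (cmod c1 + cmod c2 + 1))" by (simp add: \<eta>'_def)
    also have "\<dots> < \<eta> * 1"
      using eta by (intro mult_strict_left_mono) (simp_all add: add_nonneg_pos)
    finally show "vnorm (2*d) b < \<eta>" by simp
    have "\<eta>' \<le> \<eta> / 1" unfolding \<eta>'_def using eta by (intro divide_left_mono) (auto simp: add_nonneg_pos)
    then show "vnorm (2*d) a < \<eta>" using va by simp
  qed
  ultimately show "\<exists>k a b. a \<in> Em (- real (k*N) * \<alpha>) \<and>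
      cocycle_iter (2*d) \<alpha> L (k*N) (- real (k*N) * \<alpha>) a = window u 0 \<and>
      cocycle_iter (2*d) \<alpha> L (k*N) (- real (k*N) * \<alpha>) b = (\<lambda>i. c1 * window u 0 i + c2 * window w 0 i) \<and>
      vnorm (2*d) a < \<eta> \<and> vnorm (2*d) b < \<eta>"
    using ia by blast
qed

lemma no_independent_decaying_solutions:
  assumes ru: "\<And>n. dual_eq u n" and rw: "\<And>n. dual_eq w n"
    and du: "decaying u" and dw: "decaying w"
    and indep: "\<And>x y. (\<forall>n. x * u n + y * w n = 0) \<Longrightarrow> x = 0 \<and> y = 0"
  shows False
proof -
  let ?Ua = "window u 0" and ?Ub = "window w 0"
  have Ua: "?Ua \<in> Em 0" and Ub: "?Ub \<in> Em 0"
    using window_in_Em_if_decaying ru rw du dw by blast+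
  have vi: "x = 0 \<and> y = 0" if "(\<lambda>i. x * ?Ua i + y * ?Ub i) = (\<lambda>i. 0)" for x y
    by (rule window_independent[OF ru rw indep that])
  have Ua0: "?Ua \<noteq> (\<lambda>i. 0)" using vi[of 1 0] by auto
  obtain b where b: "\<forall>j<d-1. b j \<in> Ep 0" "\<forall>c. lincomb (d-1) b c = (\<lambda>i. 0) \<longrightarrow> (\<forall>j<d-1. c j = 0)"
    "Ep 0 = {lincomb (d-1) b c | c. True}"
    using Ep_dim[of 0] unfolding subspace_dim_def by blast
  define X where "X i = (if i < d-1 then b i else if i = d-1 then ?Ua else ?Ub)" for i
  have dd: "d + 1 = Suc (Suc (d-1))" "Suc (d-1) = d" using d_ge_1 by auto
  have sumX: "(\<lambda>t. \<Sum>i<d+1. c i * X i t) = (\<lambda>t. lincomb (d-1) b c t + (c (d-1) * ?Ua t + c d * ?Ub t))" for c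
  proof
    fix t
    have "(\<Sum>i<d+1. c i * X i t) = (\<Sum>i<d-1. c i * X i t) + c (d-1) * X (d-1) t + c d * X d t"
      unfolding dd(1) sum.lessThan_Suc by (simp only: dd(2))
    moreover have "(\<Sum>i<d-1. c i * X i t) = lincomb (d-1) b c t"
      unfolding lincomb_def by (rule sum.cong) (auto simp: X_def)
    moreover have "X (d-1) = ?Ua" "X d = ?Ub" using d_ge_1 by (auto simp: X_def)
    ultimately show "(\<Sum>i<d+1. c i * X i t) = lincomb (d-1) b c t + (c (d-1) * ?Ua t + c d * ?Ub t)"
      by (simp add: add.assoc)
  qed
  have "card {..<d+1} \<le> d"
  proof (rule isotropic_independent_card_le)
    show "\<forall>i\<in>{..<d+1}. X i \<in> cvec (2*d)" using b(1) Ep_cvec by (auto simp: X_def)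
    show "hform (\<lambda>t. \<Sum>i\<in>{..<d+1}. c i * X i t) (\<lambda>t. \<Sum>i\<in>{..<d+1}. c i * X i t) = 0" for c
      unfolding sumX using b(3) by (auto intro!: hform_Ep_plus_windows_eq_0[OF ru rw du dw Ua Ua0])
    show "\<forall>i\<in>{..<d+1}. c i = 0" if "(\<lambda>t. \<Sum>i\<in>{..<d+1}. c i * X i t) = (\<lambda>t. 0)" for c
    proof -
      have "lincomb (d-1) b c \<in> Ep 0" using b(3) by auto
      moreover have "(\<lambda>t. c (d-1) * ?Ua t + c d * ?Ub t) \<in> Em 0"
        by (intro subspace_dim_add[OF Em_dim] subspace_dim_scale[OF Em_dim] Ua Ub)
      ultimately have "lincomb (d-1) b c = (\<lambda>i. 0)" "(\<lambda>t. c (d-1) * ?Ua t + c d * ?Ub t) = (\<lambda>i. 0)"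
        using split_zero that unfolding sumX by blast+
      then have "\<forall>j<d-1. c j = 0" "c (d-1) = 0" "c d = 0" using b(2) vi by auto
      then show ?thesis by (metis dd lessThan_iff less_Suc_eq)
    qed
  qed simp
  then show False by simp
qed

end

lemma real_analytic_continuous: "real_analytic f \<Longrightarrow> continuous_on UNIV f"
proof -
  assume ra: "real_analytic f"
  have "isCont f x" for x
  proof -
    obtain r c where r: "r > 0" and s: "\<And>y. \<bar>y - x\<bar> < r \<Longrightarrow> (\<lambda>n. c n * (y - x) ^ n) sums f y"
      using ra unfolding real_analytic_def by blast
    define K where "K = r / 2"
    have "(\<lambda>n. c n * ((x + K) - x) ^ n) sums f (x + K)" using r by (intro s) (simp add: K_def)
    then have sK: "summable (\<lambda>n. c n * K ^ n)" by (simp add: sums_iff)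
    have "norm (0::real) < norm K" using r by (simp add: K_def)
    from isCont_powser[OF sK this] have c0: "isCont (\<lambda>z. \<Sum>n. c n * z ^ n) ((\<lambda>y. y - x) x)" by simp
    have "isCont (\<lambda>y. y - x) x" by (intro continuous_intros)
    from isCont_o2[OF this c0] have "isCont (\<lambda>y. \<Sum>n. c n * (y - x) ^ n) x" .
    moreover have "eventually (\<lambda>y. f y = (\<Sum>n. c n * (y - x) ^ n)) (nhds x)"
      unfolding eventually_nhds_metric
    proof (intro exI[of _ r] conjI allI impI)
      fix y assume "dist y x < r"
      then have "\<bar>y - x\<bar> < r" by (simp add: dist_real_def)
      then show "f y = (\<Sum>n. c n * (y - x) ^ n)" using s sums_unique by metis
    qed (rule r)
    ultimately show ?thesis using isCont_cong by metis
  qed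
  then show ?thesis by (simp add: continuous_at_imp_continuous_on)
qed

lemma matrix_inv_mult_eq_mat1:
  fixes C M :: "real^'n^'n"
  assumes "det C \<noteq> 0" and "matrix_inv C ** M = mat 1"
  shows "M = C"
proof -
  have "invertible C" using assms(1) by (simp add: invertible_det_nz)
  then have "C ** matrix_inv C = mat 1"
    unfolding invertible_def matrix_inv_def by (rule someI2_ex) auto
  then have "M = C ** (matrix_inv C ** M)" by (simp add: matrix_mul_assoc)
  then show ?thesis using assms(2) by simp
qed

lemma reducible_first_row:
  fixes B :: "real \<Rightarrow> real^2^2"
  assumes B: "analytic_SL2 B"
    and conj: "\<forall>x. matrix_inv (B (x + \<alpha>)) ** schrodinger v E x ** B x = mat 1"
  shows "B x $ 2 $ j = B (x - \<alpha>) $ 1 $ j"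
    and "B (x + \<alpha>) $ 1 $ j + B (x - \<alpha>) $ 1 $ j + v x * B x $ 1 $ j = E * B x $ 1 $ j"
proof -
  have step: "schrodinger v E y ** B y = B (y + \<alpha>)" for y
    using matrix_inv_mult_eq_mat1[of "B (y + \<alpha>)"] conj B
    by (simp add: analytic_SL2_def matrix_mul_assoc)
  have ent: "(schrodinger v E y ** B y) $ i $ j = schrodinger v E y $ i $ 1 * B y $ 1 $ j + schrodinger v E y $ i $ 2 * B y $ 2 $ j"
    for y i
    by (simp add: matrix_matrix_mult_def sum_2)
  have row2: "B (y + \<alpha>) $ 2 $ j = B y $ 1 $ j" for y
    using step[of y] ent[of y 2] by (simp add: schrodinger_def)
  then show "B x $ 2 $ j = B (x - \<alpha>) $ 1 $ j" using row2[of "x - \<alpha>"] by simp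
  have "B (x + \<alpha>) $ 1 $ j = (E - v x) * B x $ 1 $ j - B x $ 2 $ j"
    using step[of x] ent[of x 1] by (simp add: schrodinger_def)
  then show "B (x + \<alpha>) $ 1 $ j + B (x - \<alpha>) $ 1 $ j + v x * B x $ 1 $ j = E * B x $ 1 $ j"
    using row2[of "x - \<alpha>"] by (simp add: algebra_simps)
qed

lemma trig_poly_fexp: "trig_poly d vh x = (\<Sum>k\<in>{-int d..int d}. vh k * fexp k x)"
  by (simp add: trig_poly_def fexp_def)

lemma cont_periodic_trig_poly: "cont_periodic (trig_poly d vh)"
proof -
  have "cont_periodic (\<lambda>x. \<Sum>k\<in>K. vh k * fexp k x)" if "finite K" for K
    using that
  proof (induction K rule: finite_induct)
    case empty
    then show ?case by (simp add: cont_periodic_def)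
  next
    case (insert k K)
    then show ?case by (simp add: cont_periodic_add cont_periodic_scale cont_periodic_fexp)
  qed
  then show ?thesis by (simp add: trig_poly_fexp[abs_def])
qed

lemma fourier_coeff_trig_poly: "fourier_coeff (trig_poly d vh) m = (if m \<in> {-int d..int d} then vh m else 0)"
proof -
  have "fourier_coeff (trig_poly d vh) m = fourier_coeff (\<lambda>x. \<Sum>k\<in>{-int d..int d}. vh k * fexp k x) m"
    by (simp add: trig_poly_fexp[abs_def])
  also have "\<dots> = (\<Sum>k\<in>{-int d..int d}. fourier_coeff (\<lambda>x. vh k * fexp k x) m)"
    by (rule fourier_coeff_sum) (auto intro: cont_periodic_scale cont_periodic_fexp)
  also have "\<dots> = (\<Sum>k\<in>{-int d..int d}. vh k * (if k = m then 1 else 0))"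
    by (simp add: fourier_coeff_scale fourier_coeff_fexp)
  also have "\<dots> = (if m \<in> {-int d..int d} then vh m else 0)"
    by (simp add: if_distrib sum.delta' cong: if_cong)
  finally show ?thesis .
qed

lemma trig_poly_real_hermitian:
  assumes real: "\<forall>x. trig_poly d vh x \<in> \<real>" and k: "\<bar>k\<bar> \<le> int d"
  shows "vh (-k) = cnj (vh k)"
proof -
  have c: "cnj (trig_poly d vh x) = trig_poly d vh x" for x using real Reals_cnj_iff by blast
  have "fourier_coeff (trig_poly d vh) (-k) = integral {0..1} (\<lambda>x. cnj (trig_poly d vh x * fexp (- k) x))"
    unfolding fourier_coeff_def by (simp add: c fexp_cnj)
  also have "\<dots> = cnj (fourier_coeff (trig_poly d vh) k)" unfolding fourier_coeff_def integral_cnj ..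
  finally have "fourier_coeff (trig_poly d vh) (-k) = cnj (fourier_coeff (trig_poly d vh) k)" .
  moreover have "-k \<in> {-int d..int d}" "k \<in> {-int d..int d}" using k by auto
  ultimately show ?thesis by (simp only: fourier_coeff_trig_poly if_True)
qed

lemma fourier_coeff_mult_trig_poly:
  assumes f: "cont_periodic f"
  shows "fourier_coeff (\<lambda>x. trig_poly d vh x * f x) m = (\<Sum>k\<in>{-int d..int d}. vh k * fourier_coeff f (m - k))"
proof -
  have "(\<lambda>x. trig_poly d vh x * f x) = (\<lambda>x. \<Sum>k\<in>{-int d..int d}. vh k * (fexp k x * f x))"
    by (simp add: trig_poly_fexp sum_distrib_right sum_distrib_left mult_ac)
  then have "fourier_coeff (\<lambda>x. trig_poly d vh x * f x) m
      = (\<Sum>k\<in>{-int d..int d}. fourier_coeff (\<lambda>x. vh k * (fexp k x * f x)) m)"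
    using fourier_coeff_sum[of "{-int d..int d}" "\<lambda>k x. vh k * (fexp k x * f x)" m]
      cont_periodic_scale[OF cont_periodic_mult[OF cont_periodic_fexp f]] by simp
  also have "\<dots> = (\<Sum>k\<in>{-int d..int d}. vh k * fourier_coeff f (m - k))"
    by (simp add: fourier_coeff_scale fourier_coeff_mult_fexp)
  finally show ?thesis .
qed

text \<open>Aubry duality: the Fourier coefficients of a periodic solution of the Schroedinger equation
  solve the dual equation; the shifts by \<open>\<plusminus>\<alpha>\<close> become multiplication by \<open>2 cos(2\<pi>m\<alpha>)\<close>.\<close>
lemma fourier_coeff_dual_eq:
  assumes f: "cont_periodic f"
    and eq: "\<And>x. f (x + \<alpha>) + f (x - \<alpha>) + trig_poly d vh x * f x = complex_of_real E * f x"
  shows "(\<Sum>k\<in>{-int d..int d}. vh k * fourier_coeff f (m - k))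
      + complex_of_real (2 * cos (2 * pi * (of_int m * \<alpha>))) * fourier_coeff f m
     = complex_of_real E * fourier_coeff f m"
proof -
  have c1: "cont_periodic (\<lambda>x. f (x + \<alpha>))" by (rule cont_periodic_shift[OF f])
  have c2: "cont_periodic (\<lambda>x. f (x - \<alpha>))" using cont_periodic_shift[OF f, of "-\<alpha>"] by simp
  have c3: "cont_periodic (\<lambda>x. trig_poly d vh x * f x)" by (rule cont_periodic_mult[OF cont_periodic_trig_poly f])
  have s2: "fourier_coeff (\<lambda>x. f (x - \<alpha>)) m = fexp m (-\<alpha>) * fourier_coeff f m"
    using fourier_coeff_shift[OF f, of "-\<alpha>" m] by simp
  have "fourier_coeff (\<lambda>x. f (x + \<alpha>) + f (x - \<alpha>) + trig_poly d vh x * f x) m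
      = fourier_coeff (\<lambda>x. complex_of_real E * f x) m"
    using eq by simp
  then have "(fexp m \<alpha> + fexp m (-\<alpha>)) * fourier_coeff f m
      + (\<Sum>k\<in>{-int d..int d}. vh k * fourier_coeff f (m - k)) = complex_of_real E * fourier_coeff f m"
    by (simp add: fourier_coeff_add[OF cont_periodic_add[OF c1 c2] c3] fourier_coeff_add[OF c1 c2]
        fourier_coeff_shift[OF f] s2 fourier_coeff_mult_trig_poly[OF f] fourier_coeff_scale distrib_right)
  moreover have "fexp m \<alpha> + fexp m (-\<alpha>) = complex_of_real (2 * cos (2 * pi * (of_int m * \<alpha>)))"
    by (simp add: fexp_cis complex_eq_iff mult_ac)
  ultimately show ?thesis by (simp add: algebra_simps)
qed

lemma casoratian_independent:
  fixes fa fb :: "real \<Rightarrow> complex"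
  assumes W: "\<And>t. fa t * fb (t - \<alpha>) - fb t * fa (t - \<alpha>) = 1"
    and Z: "\<And>t. x * fa t + y * fb t = 0"
  shows "x = 0 \<and> y = 0"
proof -
  have "x * (fa t * fb (t - \<alpha>) - fb t * fa (t - \<alpha>)) = fb (t - \<alpha>) * (x * fa t + y * fb t) - fb t * (x * fa (t - \<alpha>) + y * fb (t - \<alpha>))"
    for t by (simp add: algebra_simps)
  moreover have "y * (fa t * fb (t - \<alpha>) - fb t * fa (t - \<alpha>)) = fa t * (x * fa (t - \<alpha>) + y * fb (t - \<alpha>)) - fa (t - \<alpha>) * (x * fa t + y * fb t)"
    for t by (simp add: algebra_simps)
  ultimately show ?thesis using W[of 0] Z[of 0] Z[of "0 - \<alpha>"] by (metis mult_1_right mult_zero_right diff_self)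
qed

lemma reducible_first_row_complex:
  fixes B :: "real \<Rightarrow> real^2^2"
  assumes real: "\<forall>x. trig_poly d vh x \<in> \<real>" and B: "analytic_SL2 B"
    and conj: "\<forall>x. matrix_inv (B (x + \<alpha>)) ** schrodinger (\<lambda>x. Re (trig_poly d vh x)) E x ** B x = mat 1"
  defines "f j x \<equiv> complex_of_real (B x $ 1 $ j)"
  shows "cont_periodic (f j)"
    and "f j (x + \<alpha>) + f j (x - \<alpha>) + trig_poly d vh x * f j x = complex_of_real E * f j x"
    and "f 1 t * f 2 (t - \<alpha>) - f 2 t * f 1 (t - \<alpha>) = 1"
proof -
  show "cont_periodic (f j)"
    using B real_analytic_continuous unfolding cont_periodic_def f_def analytic_SL2_def
    by (auto intro!: continuous_on_of_real)
  have vT: "complex_of_real (Re (trig_poly d vh x)) = trig_poly d vh x"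
    using real by (simp add: complex_is_Real_iff complex_eq_iff)
  have "complex_of_real (B (x + \<alpha>) $ 1 $ j + B (x - \<alpha>) $ 1 $ j + Re (trig_poly d vh x) * B x $ 1 $ j)
      = complex_of_real (E * B x $ 1 $ j)"
    using reducible_first_row(2)[OF B conj, of x j] by simp
  then show "f j (x + \<alpha>) + f j (x - \<alpha>) + trig_poly d vh x * f j x = complex_of_real E * f j x"
    using vT by (simp add: f_def)
  have "B t $ 1 $ 1 * B t $ 2 $ 2 - B t $ 1 $ 2 * B t $ 2 $ 1 = 1"
    using B by (simp add: analytic_SL2_def det_2)
  then have "B t $ 1 $ 1 * B (t - \<alpha>) $ 1 $ 2 - B t $ 1 $ 2 * B (t - \<alpha>) $ 1 $ 1 = 1"
    by (simp add: reducible_first_row(1)[OF B conj])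
  then have "complex_of_real (B t $ 1 $ 1 * B (t - \<alpha>) $ 1 $ 2 - B t $ 1 $ 2 * B (t - \<alpha>) $ 1 $ 1) = 1"
    by simp
  then show "f 1 t * f 2 (t - \<alpha>) - f 2 t * f 1 (t - \<alpha>) = 1" by (simp add: f_def)
qed

context dual_cocycle
begin

lemma fourier_coeff_dual_solution:
  assumes f: "cont_periodic f"
    and eq: "\<And>x. f (x + \<alpha>) + f (x - \<alpha>) + trig_poly d vh x * f x = complex_of_real E * f x"
  shows "dual_eq (\<lambda>n. fourier_coeff f (-n)) n"
proof -
  have "2 * pi * (of_int (-n) * \<alpha>) = - (2 * pi * (of_int n * \<alpha>))" by simp
  then have "cos (2 * pi * (of_int (-n) * \<alpha>)) = cos (2 * pi * (of_int n * \<alpha>))"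
    by (simp only: cos_minus)
  moreover have "(\<Sum>k\<in>{-int d..int d}. vh k * fourier_coeff f (-n - k))
      = (\<Sum>k\<in>{-int d..int d}. vh k * fourier_coeff f (- (n + k)))"
    by (rule sum.cong) simp_all
  ultimately show ?thesis
    using fourier_coeff_dual_eq[OF f eq, of "-n"] unfolding dual_eq_def by simp
qed

lemma reducible_imp_decaying_dual_solutions:
  fixes B :: "real \<Rightarrow> real^2^2"
  assumes real: "\<forall>x. trig_poly d vh x \<in> \<real>" and B: "analytic_SL2 B"
    and conj: "\<forall>x. matrix_inv (B (x + \<alpha>)) ** schrodinger (\<lambda>x. Re (trig_poly d vh x)) E x ** B x = mat 1"
  shows "\<exists>u w. (\<forall>n. dual_eq u n) \<and> (\<forall>n. dual_eq w n) \<and> decaying u \<and> decaying w \<and>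
    (\<forall>x y. (\<forall>n. x * u n + y * w n = 0) \<longrightarrow> x = 0 \<and> y = 0)"
proof -
  define f where "f j x = complex_of_real (B x $ 1 $ j)" for j x
  have cf: "cont_periodic (f j)" for j
    unfolding f_def by (rule reducible_first_row_complex(1)[OF real B conj])
  have eq: "f j (x + \<alpha>) + f j (x - \<alpha>) + trig_poly d vh x * f j x = complex_of_real E * f j x" for j x
    unfolding f_def by (rule reducible_first_row_complex(2)[OF real B conj])
  have W: "f 1 t * f 2 (t - \<alpha>) - f 2 t * f 1 (t - \<alpha>) = 1" for t
    unfolding f_def by (rule reducible_first_row_complex(3)[OF real B conj])
  define u where "u n = fourier_coeff (f 1) (-n)" for n
  define w where "w n = fourier_coeff (f 2) (-n)" for n
  have "\<forall>n. dual_eq u n" "\<forall>n. dual_eq w n"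
    unfolding u_def w_def using fourier_coeff_dual_solution[OF cf eq] by blast+
  moreover have "decaying u" "decaying w"
    unfolding u_def w_def by (rule decaying_reflect[OF riemann_lebesgue[OF cf]])+
  moreover have "\<forall>x y. (\<forall>n. x * u n + y * w n = 0) \<longrightarrow> x = 0 \<and> y = 0"
  proof (intro allI impI)
    fix x y assume uw: "\<forall>n. x * u n + y * w n = 0"
    have "fourier_coeff (\<lambda>t. x * f 1 t + y * f 2 t) m = x * u (-m) + y * w (-m)" for m
      using fourier_coeff_add[OF cont_periodic_scale[OF cf] cont_periodic_scale[OF cf]]
      by (simp add: fourier_coeff_scale u_def w_def)
    then have zero: "fourier_coeff (\<lambda>t. x * f 1 t + y * f 2 t) m = 0" for m using uw by simp
    have "cont_periodic (\<lambda>t. x * f 1 t + y * f 2 t)" by (intro cont_periodic_add cont_periodic_scale cf)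
    from fourier_coeff_zero_imp_zero[OF this zero]
    show "x = 0 \<and> y = 0" by (rule casoratian_independent[where fa="f 1" and fb="f 2", OF W])
  qed
  ultimately show ?thesis by blast
qed

end

theorem theorem1p5:
  fixes \<alpha> E :: real and d :: nat and vh :: "int \<Rightarrow> complex"
  assumes "\<alpha> \<notin> \<rat>"
    and "d \<ge> 1"
    and "vh (int d) \<noteq> 0"
    and "\<forall>x. trig_poly d vh x \<in> \<real>"
    and "PH2 d \<alpha> (dualL d vh E)"
  shows "\<not> (\<exists>B. analytic_SL2 B \<and>
            (\<forall>x. matrix_inv (B (x + \<alpha>)) ** schrodinger (\<lambda>x. Re (trig_poly d vh x)) E x ** B x = mat 1))"
proof
  assume "\<exists>B. analytic_SL2 B \<and>
            (\<forall>x. matrix_inv (B (x + \<alpha>)) ** schrodinger (\<lambda>x. Re (trig_poly d vh x)) E x ** B x = mat 1)"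
  then obtain B where B: "analytic_SL2 B"
    and conj: "\<forall>x. matrix_inv (B (x + \<alpha>)) ** schrodinger (\<lambda>x. Re (trig_poly d vh x)) E x ** B x = mat 1"
    by blast
  interpret dual_cocycle d vh E \<alpha>
    using assms(2,3) trig_poly_real_hermitian[OF assms(4)] by unfold_locales auto
  have "dominated (2*d) \<alpha> (dualL d vh E) (d - 1)" using assms(5) by (simp add: PH2_def)
  then obtain Ep Em P N where "dominated_split d vh E \<alpha> Ep Em P N"
    by (rule dominated_split_of_dominated[OF dual_cocycle_axioms])
  then interpret dominated_split d vh E \<alpha> Ep Em P N .
  obtain u w where uw: "(\<forall>n. dual_eq u n) \<and> (\<forall>n. dual_eq w n) \<and> decaying u \<and> decaying w \<and>
      (\<forall>x y. (\<forall>n. x * u n + y * w n = 0) \<longrightarrow> x = 0 \<and> y = 0)"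
    using reducible_imp_decaying_dual_solutions[OF assms(4) B conj] by (elim exE)
  show False
    by (rule no_independent_decaying_solutions[of u w]) (use uw in blast)+
qed

end
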